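(* Let $\mathcal{H}$ be a complex linear space with a non-degenerate indefinite inner product $[\cdot,\cdot]$, and let $\mathcal{H}=\mathcal{L}_+[\dot+]\mathcal{L}_-$ and $\mathcal{H}=\mathcal{M}_+[\dot+]\mathcal{M}_-$ be two fundamental decompositions with associated inner products $\langle\cdot,\cdot\rangle_{\mathcal{L}},\langle\cdot,\cdot\rangle_{\mathcal{M}}$, norms $\|\cdot\|_{\mathcal{L}},\|\cdot\|_{\mathcal{M}}$ and fundamental symmetries $J_{\mathcal{L}},J_{\mathcal{M}}$. Suppose the norms $\|\cdot\|_{\mathcal{L}}$ and $\|\cdot\|_{\mathcal{M}}$ are equivalent on $\mathcal{H}$, let $\mathcal{H}_{ext}$ denote the common completion of $\mathcal{H}$ with respect to these norms, and denote again by $J_{\mathcal{L}},J_{\mathcal{M}}$ their extensions by continuity to $\mathcal{H}_{ext}$ (and by $\langle\cdot,\cdot\rangle_{\mathcal{L}},\langle\cdot,\cdot\rangle_{\mathcal{M}}$ the extended inner products). Then there exists an operator $Q$ on $\mathcal{H}_{ext}$ which, for each $\mathcal{X}\in\{\mathcal{L},\mathcal{M}\}$, is bounded and self-adjoint in the Hilbert space $(\mathcal{H}_{ext},\langle\cdot,\cdot\rangle_{\mathcal{X}})$ and satisfies $J_{\mathcal{X}}Q=-QJ_{\mathcal{X}}$, and such that $$J_{\mathcal{L}}J_{\mathcal{M}}=e^{Q},\qquad J_{\mathcal{M}}J_{\mathcal{L}}=e^{-Q}.$$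
   Context: An indefinite inner product is a Hermitian sesquilinear form $[\cdot,\cdot]$ (linear in the second argument) with vectors of both positive and negative square; non-degenerate means $[f,g]=0\ \forall g$ implies $f=0$. A subspace is positive (negative) if every nonzero vector in it has $[f,f]>0$ ($<0$). A fundamental decomposition $\mathcal{H}=\mathcal{L}_+[\dot+]\mathcal{L}_-$ is a direct sum of a positive subspace $\mathcal{L}_+$ and a negative subspace $\mathcal{L}_-$ which are mutually $[\cdot,\cdot]$-orthogonal. Its associated definite inner product is $\langle f,g\rangle_{\mathcal{L}}=[f_+,g_+]-[f_-,g_-]$ ($f=f_++f_-$, $g=g_++g_-$, $f_\pm,g_\pm\in\mathcal{L}_\pm$), norm $\|f\|_{\mathcal{L}}=\sqrt{\langle f,f\rangle_{\mathcal{L}}}$, and fundamental symmetry $J_{\mathcal{L}}(f_++f_-)=f_+-f_-$, so that $\langle f,g\rangle_{\mathcal{L}}=[J_{\mathcal{L}}f,g]$. The same notation is used for $\mathcal{M}_\pm$. When the norms are equivalent, $J_{\mathcal{L}}$ and $J_{\mathcal{M}}$ are bounded in either norm and so extend by continuity. *)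

theory Defs
  imports "HOL-Analysis.Analysis"
begin

(* Complex linear spaces are modelled by a type 'a::ab_group_add together with an
   explicit complex scalar multiplication sc satisfying the vector_space locale. *)

definition herm_sesq :: "(complex \<Rightarrow> 'a::ab_group_add \<Rightarrow> 'a) \<Rightarrow> ('a \<Rightarrow> 'a \<Rightarrow> complex) \<Rightarrow> bool" where
  "herm_sesq sc ip \<longleftrightarrow>
     (\<forall>x y z. ip x (y + z) = ip x y + ip x z) \<and>
     (\<forall>c x y. ip x (sc c y) = c * ip x y) \<and>
     (\<forall>x y. ip y x = cnj (ip x y))"

definition non_degenerate :: "('a::ab_group_add \<Rightarrow> 'a \<Rightarrow> complex) \<Rightarrow> bool" where
  "non_degenerate ip \<longleftrightarrow> (\<forall>f. (\<forall>g. ip f g = 0) \<longrightarrow> f = 0)"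

definition indefinite :: "('a \<Rightarrow> 'a \<Rightarrow> complex) \<Rightarrow> bool" where
  "indefinite ip \<longleftrightarrow> (\<exists>f. Re (ip f f) > 0) \<and> (\<exists>g. Re (ip g g) < 0)"

definition positive_subspace :: "(complex \<Rightarrow> 'a::ab_group_add \<Rightarrow> 'a) \<Rightarrow> ('a \<Rightarrow> 'a \<Rightarrow> complex) \<Rightarrow> 'a set \<Rightarrow> bool" where
  "positive_subspace sc ip S \<longleftrightarrow> module.subspace sc S \<and> (\<forall>f\<in>S. f \<noteq> 0 \<longrightarrow> Re (ip f f) > 0)"

definition negative_subspace :: "(complex \<Rightarrow> 'a::ab_group_add \<Rightarrow> 'a) \<Rightarrow> ('a \<Rightarrow> 'a \<Rightarrow> complex) \<Rightarrow> 'a set \<Rightarrow> bool" where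
  "negative_subspace sc ip S \<longleftrightarrow> module.subspace sc S \<and> (\<forall>f\<in>S. f \<noteq> 0 \<longrightarrow> Re (ip f f) < 0)"

definition fundamental_decomposition ::
  "(complex \<Rightarrow> 'a::ab_group_add \<Rightarrow> 'a) \<Rightarrow> ('a \<Rightarrow> 'a \<Rightarrow> complex) \<Rightarrow> 'a set \<Rightarrow> 'a set \<Rightarrow> bool" where
  "fundamental_decomposition sc ip Lp Lm \<longleftrightarrow>
     positive_subspace sc ip Lp \<and> negative_subspace sc ip Lm \<and>
     Lp \<inter> Lm = {0} \<and> (\<forall>f. \<exists>u\<in>Lp. \<exists>v\<in>Lm. f = u + v) \<and>
     (\<forall>u\<in>Lp. \<forall>v\<in>Lm. ip u v = 0)"

definition fd_plus :: "'a::ab_group_add set \<Rightarrow> 'a set \<Rightarrow> 'a \<Rightarrow> 'a" where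
  "fd_plus Lp Lm f = (THE u. u \<in> Lp \<and> f - u \<in> Lm)"

definition fd_minus :: "'a::ab_group_add set \<Rightarrow> 'a set \<Rightarrow> 'a \<Rightarrow> 'a" where
  "fd_minus Lp Lm f = f - fd_plus Lp Lm f"

definition fd_ip :: "('a::ab_group_add \<Rightarrow> 'a \<Rightarrow> complex) \<Rightarrow> 'a set \<Rightarrow> 'a set \<Rightarrow> 'a \<Rightarrow> 'a \<Rightarrow> complex" where
  "fd_ip ip Lp Lm f g =
     ip (fd_plus Lp Lm f) (fd_plus Lp Lm g) - ip (fd_minus Lp Lm f) (fd_minus Lp Lm g)"

definition form_norm :: "('b \<Rightarrow> 'b \<Rightarrow> complex) \<Rightarrow> 'b \<Rightarrow> real" where
  "form_norm p x = sqrt (Re (p x x))"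

definition fd_norm :: "('a::ab_group_add \<Rightarrow> 'a \<Rightarrow> complex) \<Rightarrow> 'a set \<Rightarrow> 'a set \<Rightarrow> 'a \<Rightarrow> real" where
  "fd_norm ip Lp Lm f = form_norm (fd_ip ip Lp Lm) f"

definition fd_J :: "'a::ab_group_add set \<Rightarrow> 'a set \<Rightarrow> 'a \<Rightarrow> 'a" where
  "fd_J Lp Lm f = fd_plus Lp Lm f - fd_minus Lp Lm f"

definition norms_equiv :: "('b \<Rightarrow> real) \<Rightarrow> ('b \<Rightarrow> real) \<Rightarrow> bool" where
  "norms_equiv N1 N2 \<longleftrightarrow> (\<exists>c C. c > 0 \<and> C > 0 \<and> (\<forall>x. c * N1 x \<le> N2 x \<and> N2 x \<le> C * N1 x))"

definition inner_product_form :: "(complex \<Rightarrow> 'b::ab_group_add \<Rightarrow> 'b) \<Rightarrow> ('b \<Rightarrow> 'b \<Rightarrow> complex) \<Rightarrow> bool" where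
  "inner_product_form sc p \<longleftrightarrow> herm_sesq sc p \<and> (\<forall>x. x \<noteq> 0 \<longrightarrow> Re (p x x) > 0)"

definition complete_wrt :: "('b::ab_group_add \<Rightarrow> real) \<Rightarrow> bool" where
  "complete_wrt N \<longleftrightarrow>
     (\<forall>X::nat \<Rightarrow> 'b. (\<forall>e>0. \<exists>M. \<forall>m\<ge>M. \<forall>n\<ge>M. N (X m - X n) < e) \<longrightarrow>
        (\<exists>l. (\<lambda>n. N (X n - l)) \<longlonglongrightarrow> 0))"

definition dense_image :: "('b::ab_group_add \<Rightarrow> real) \<Rightarrow> ('a \<Rightarrow> 'b) \<Rightarrow> bool" where
  "dense_image N \<iota> \<longleftrightarrow> (\<forall>y e. e > 0 \<longrightarrow> (\<exists>x. N (y - \<iota> x) < e))"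

definition bounded_wrt :: "('b \<Rightarrow> real) \<Rightarrow> ('b \<Rightarrow> 'b) \<Rightarrow> bool" where
  "bounded_wrt N T \<longleftrightarrow> (\<exists>K. \<forall>x. N (T x) \<le> K * N x)"

definition self_adjoint_wrt :: "('b \<Rightarrow> 'b \<Rightarrow> complex) \<Rightarrow> ('b \<Rightarrow> 'b) \<Rightarrow> bool" where
  "self_adjoint_wrt p T \<longleftrightarrow> (\<forall>x y. p (T x) y = p x (T y))"

definition common_completion ::
  "(complex \<Rightarrow> 'a::ab_group_add \<Rightarrow> 'a) \<Rightarrow> ('a \<Rightarrow> 'a \<Rightarrow> complex) \<Rightarrow> ('a \<Rightarrow> 'a \<Rightarrow> complex) \<Rightarrow>
   (complex \<Rightarrow> 'b::ab_group_add \<Rightarrow> 'b) \<Rightarrow> ('a \<Rightarrow> 'b) \<Rightarrow>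
   ('b \<Rightarrow> 'b \<Rightarrow> complex) \<Rightarrow> ('b \<Rightarrow> 'b \<Rightarrow> complex) \<Rightarrow> bool" where
  "common_completion sc ipL ipM sc' \<iota> pL pM \<longleftrightarrow>
     vector_space sc' \<and> Vector_Spaces.linear sc sc' \<iota> \<and> inj \<iota> \<and>
     inner_product_form sc' pL \<and> inner_product_form sc' pM \<and>
     norms_equiv (form_norm pL) (form_norm pM) \<and>
     complete_wrt (form_norm pL) \<and> dense_image (form_norm pL) \<iota> \<and>
     (\<forall>x y. pL (\<iota> x) (\<iota> y) = ipL x y) \<and> (\<forall>x y. pM (\<iota> x) (\<iota> y) = ipM x y)"

definition continuous_extension ::
  "(complex \<Rightarrow> 'b::ab_group_add \<Rightarrow> 'b) \<Rightarrow> ('b \<Rightarrow> real) \<Rightarrow> ('a \<Rightarrow> 'b) \<Rightarrow> ('a \<Rightarrow> 'a) \<Rightarrow> ('b \<Rightarrow> 'b) \<Rightarrow> bool" where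
  "continuous_extension sc' N \<iota> J Je \<longleftrightarrow>
     Vector_Spaces.linear sc' sc' Je \<and> bounded_wrt N Je \<and> (\<forall>x. Je (\<iota> x) = \<iota> (J x))"

definition exp_series_to :: "(complex \<Rightarrow> 'b::ab_group_add \<Rightarrow> 'b) \<Rightarrow> ('b \<Rightarrow> real) \<Rightarrow> ('b \<Rightarrow> 'b) \<Rightarrow> 'b \<Rightarrow> 'b \<Rightarrow> bool" where
  "exp_series_to sc N Q x y \<longleftrightarrow>
     (\<lambda>n. N ((\<Sum>k<n. sc (inverse (fact k)) ((Q ^^ k) x)) - y)) \<longlonglongrightarrow> 0"

end

theory Submission
  imports Defs "HOL-Computational_Algebra.Formal_Power_Series"
begin

text \<open>
  Put \<open>U = J\<^sub>L J\<^sub>M\<close>. Since \<open>\<langle>U x, y\<rangle>\<^sub>L = \<langle>x, y\<rangle>\<^sub>M\<close>, the operator \<open>U\<close> is self-adjoint and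
  uniformly positive on the completion with respect to \<open>\<langle>\<cdot>,\<cdot>\<rangle>\<^sub>L\<close>, and \<open>J\<^sub>L U J\<^sub>L = U\<^sup>-\<^sup>1\<close>.
  Its Cayley transform \<open>K = (U - 1)(U + 1)\<^sup>-\<^sup>1\<close> is therefore a self-adjoint strict contraction
  anticommuting with \<open>J\<^sub>L\<close>, so \<open>Q = 2 artanh K\<close>, a series in the odd powers of \<open>K\<close>, converges,
  is self-adjoint and anticommutes with \<open>J\<^sub>L\<close> (and hence with \<open>J\<^sub>M = J\<^sub>L U\<close>). The formal identity
  \<open>exp (2 artanh X) = (1 + X) / (1 - X)\<close> turns into \<open>e\<^sup>Q = U\<close> by an absolutely convergent
  rearrangement of double series, and conjugating with \<open>J\<^sub>L\<close> gives \<open>e\<^sup>-\<^sup>Q = J\<^sub>M J\<^sub>L\<close>.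
\<close>

unbundle no vec_syntax
unbundle fps_syntax

section \<open>Inner product forms and operators\<close>

lemma funpow_commute: "(\<And>x. S (T x) = T (S x)) \<Longrightarrow> S ((T ^^ n) x) = (T ^^ n) (S x)"
  by (induction n) auto

locale ip_space = vector_space sc for sc :: "complex \<Rightarrow> 'a::ab_group_add \<Rightarrow> 'a" +
  fixes p :: "'a \<Rightarrow> 'a \<Rightarrow> complex"
  assumes ip_form: "inner_product_form sc p"
begin

abbreviation N :: "'a \<Rightarrow> real" where "N \<equiv> form_norm p"

lemma ip_add_right: "p x (y + z) = p x y + p x z"
  using ip_form unfolding inner_product_form_def herm_sesq_def by blast

lemma ip_scale_right: "p x (sc c y) = c * p x y"
  using ip_form unfolding inner_product_form_def herm_sesq_def by blast

lemma ip_cnj: "p y x = cnj (p x y)"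
  using ip_form unfolding inner_product_form_def herm_sesq_def by blast

lemma ip_self_pos: "x \<noteq> 0 \<Longrightarrow> Re (p x x) > 0"
  using ip_form unfolding inner_product_form_def by blast

lemma ip_add_left: "p (x + y) z = p x z + p y z"
  by (metis ip_cnj ip_add_right complex_cnj_add)

lemma ip_scale_left: "p (sc c x) y = cnj c * p x y"
  by (metis ip_cnj ip_scale_right complex_cnj_mult)

lemma ip_zero_right [simp]: "p x 0 = 0"
  using ip_add_right[of x 0 0] by simp

lemma ip_zero_left [simp]: "p 0 x = 0"
  using ip_add_left[of 0 0 x] by simp

lemma ip_minus_right: "p x (- y) = - p x y"
  using ip_add_right[of x y "- y"] by (simp add: add_eq_0_iff)

lemma ip_minus_left: "p (- x) y = - p x y"
  by (metis ip_cnj ip_minus_right complex_cnj_minus)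

lemma ip_diff_right: "p x (y - z) = p x y - p x z"
  by (simp only: diff_conv_add_uminus ip_add_right ip_minus_right)

lemma ip_diff_left: "p (x - y) z = p x z - p y z"
  by (simp only: diff_conv_add_uminus ip_add_left ip_minus_left)

lemma ip_sum_right: "p w (\<Sum>k\<in>A. f k) = (\<Sum>k\<in>A. p w (f k))"
  by (induction A rule: infinite_finite_induct) (auto simp: ip_add_right)

lemma ip_self_real: "p x x = complex_of_real (Re (p x x))"
  by (metis ip_cnj Reals_cnj_iff of_real_Re)

lemma ip_self_nonneg: "Re (p x x) \<ge> 0"
  using ip_self_pos[of x] by (cases "x = 0") auto

lemma ip_self_eq_0_iff: "Re (p x x) = 0 \<longleftrightarrow> x = 0"
  using ip_self_pos[of x] by (cases "x = 0") auto

lemma N_nonneg: "N x \<ge> 0"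
  by (simp add: form_norm_def ip_self_nonneg)

lemma N_square: "(N x)\<^sup>2 = Re (p x x)"
  by (simp add: form_norm_def ip_self_nonneg)

lemma N_eq_0_iff: "N x = 0 \<longleftrightarrow> x = 0"
  by (simp add: form_norm_def ip_self_eq_0_iff ip_self_nonneg)

lemma N_zero [simp]: "N 0 = 0"
  by (simp add: N_eq_0_iff)

lemma N_scale: "N (sc c x) = cmod c * N x"
proof -
  have "p (sc c x) (sc c x) = (c * cnj c) * complex_of_real (Re (p x x))"
    using ip_self_real[of x] by (simp add: ip_scale_left ip_scale_right algebra_simps)
  also have "\<dots> = complex_of_real ((cmod c)\<^sup>2 * Re (p x x))"
    by (simp add: complex_norm_square[symmetric])
  finally show ?thesis
    by (simp add: form_norm_def real_sqrt_mult)
qed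

lemma N_minus: "N (- x) = N x"
  by (simp add: form_norm_def ip_minus_left ip_minus_right)

lemma Cauchy_Schwarz: "cmod (p x y) \<le> N x * N y"
proof (cases "y = 0")
  case True
  then show ?thesis by (simp add: N_nonneg)
next
  case False
  define a where "a = Re (p y y)"
  have a: "a > 0" using ip_self_pos[OF False] by (simp add: a_def)
  define q where "q = p x y"
  define t where "t = cnj q / of_real a"
  have "Re (p (x - sc t y) (x - sc t y)) = Re (p x x) - (cmod q)\<^sup>2 / a"
  proof -
    have qq: "q * cnj q = of_real ((cmod q)\<^sup>2)" by (rule complex_norm_square[symmetric])
    have "p (x - sc t y) (x - sc t y)
        = p x x - (cnj t * cnj q + t * q - t * cnj t * of_real a)"
      using ip_self_real[of y] ip_cnj[of x y]
      by (simp add: ip_diff_left ip_diff_right ip_scale_left ip_scale_right q_def a_def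
          algebra_simps)
    also have "cnj t * cnj q + t * q - t * cnj t * of_real a = of_real ((cmod q)\<^sup>2 / a)"
      using a qq by (simp add: t_def field_simps)
    finally show ?thesis by simp
  qed
  with ip_self_nonneg[of "x - sc t y"] have "(cmod (p x y))\<^sup>2 \<le> Re (p x x) * a"
    using a by (simp add: q_def field_simps)
  also have "\<dots> = (N x * N y)\<^sup>2" by (simp add: N_square a_def power_mult_distrib)
  finally show ?thesis
    by (rule power2_le_imp_le) (simp add: N_nonneg)
qed

lemma N_add_square: "(N (x + y))\<^sup>2 = (N x)\<^sup>2 + 2 * Re (p x y) + (N y)\<^sup>2"
proof -
  have "p (x + y) (x + y) = p x x + (p x y + cnj (p x y)) + p y y"
    by (simp add: ip_add_left ip_add_right ip_cnj[of y x])
  then show ?thesis by (simp add: N_square)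
qed

lemma N_triangle: "N (x + y) \<le> N x + N y"
proof -
  have "Re (p x y) \<le> N x * N y"
    using Cauchy_Schwarz[of x y] complex_Re_le_cmod[of "p x y"] by linarith
  then have "(N (x + y))\<^sup>2 \<le> (N x + N y)\<^sup>2"
    by (simp add: N_add_square power2_sum)
  then show ?thesis by (rule power2_le_imp_le) (simp add: N_nonneg)
qed

lemma N_sum: "N (\<Sum>k\<in>A. f k) \<le> (\<Sum>k\<in>A. N (f k))"
proof (induction A rule: infinite_finite_induct)
  case (insert x F)
  then show ?case using N_triangle[of "f x" "sum f F"] by simp
qed (auto simp: N_eq_0_iff)

lemma eq_if_ip_right_eq: "(\<And>w. p w y1 = p w y2) \<Longrightarrow> y1 = y2"
  by (metis ip_diff_right ip_self_eq_0_iff right_minus_eq zero_complex.simps(1))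

abbreviation lin :: "('a \<Rightarrow> 'a) \<Rightarrow> bool" where
  "lin T \<equiv> Vector_Spaces.linear sc sc T"

lemma linI: "(\<And>x y. T (x + y) = T x + T y) \<Longrightarrow> (\<And>c x. T (sc c x) = sc c (T x)) \<Longrightarrow> lin T"
  by (simp add: Vector_Spaces.linear_iff vector_space_axioms)

lemma lin_add: "lin T \<Longrightarrow> T (x + y) = T x + T y"
  by (simp add: Vector_Spaces.linear_iff)

lemma lin_scale: "lin T \<Longrightarrow> T (sc c x) = sc c (T x)"
  by (simp add: Vector_Spaces.linear_iff)

lemma lin_minus: "lin T \<Longrightarrow> T (- x) = - T x"
  by (simp add: linear_iff_module_hom module_hom.neg)

lemma lin_diff: "lin T \<Longrightarrow> T (x - y) = T x - T y"
  by (simp add: linear_iff_module_hom module_hom.diff)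

lemma lin_sum: "lin T \<Longrightarrow> T (\<Sum>k\<in>A. f k) = (\<Sum>k\<in>A. T (f k))"
  by (simp add: linear_iff_module_hom module_hom.sum)

lemma lin_id: "lin (\<lambda>x. x)"
  using linear_id by (simp add: id_def)

lemma lin_comp: "lin T \<Longrightarrow> lin S \<Longrightarrow> lin (\<lambda>x. T (S x))"
  using Vector_Spaces.linear_compose[of sc sc S sc T] by (simp add: o_def)

lemma lin_funpow: "lin T \<Longrightarrow> lin (T ^^ n)"
  by (induction n) (simp_all add: lin_id lin_comp o_def id_def)

definition bounded_by :: "('a \<Rightarrow> 'a) \<Rightarrow> real \<Rightarrow> bool" where
  "bounded_by T r \<longleftrightarrow> r \<ge> 0 \<and> (\<forall>x. N (T x) \<le> r * N x)"

lemma bounded_byD: "bounded_by T r \<Longrightarrow> N (T x) \<le> r * N x"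
  by (simp add: bounded_by_def)

lemma bounded_by_nonneg: "bounded_by T r \<Longrightarrow> r \<ge> 0"
  by (simp add: bounded_by_def)

lemma bounded_by_id: "bounded_by (\<lambda>x. x) 1"
  by (simp add: bounded_by_def)

lemma bounded_by_comp:
  assumes "bounded_by T a" "bounded_by S b"
  shows "bounded_by (\<lambda>x. T (S x)) (a * b)"
  unfolding bounded_by_def
proof (intro conjI allI)
  show "a * b \<ge> 0" using assms by (simp add: bounded_by_nonneg)
  fix x
  have "N (T (S x)) \<le> a * N (S x)" by (rule bounded_byD[OF assms(1)])
  also have "\<dots> \<le> a * (b * N x)"
    by (intro mult_left_mono bounded_byD[OF assms(2)] bounded_by_nonneg[OF assms(1)])
  finally show "N (T (S x)) \<le> a * b * N x" by (simp add: mult.assoc)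
qed

lemma bounded_by_funpow: "bounded_by T r \<Longrightarrow> N ((T ^^ n) x) \<le> r ^ n * N x"
proof (induction n)
  case (Suc n)
  have "N ((T ^^ Suc n) x) \<le> r * N ((T ^^ n) x)" using bounded_byD[OF Suc.prems] by simp
  also have "\<dots> \<le> r * (r ^ n * N x)"
    using Suc bounded_by_nonneg[OF Suc.prems] by (simp add: mult_left_mono)
  finally show ?case by simp
qed simp

lemma ip_funpow_le:
  assumes "bounded_by T r"
  shows "cmod (p w ((T ^^ n) x)) \<le> N w * N x * r ^ n"
proof -
  have "cmod (p w ((T ^^ n) x)) \<le> N w * N ((T ^^ n) x)" by (rule Cauchy_Schwarz)
  also have "\<dots> \<le> N w * (r ^ n * N x)"
    by (intro mult_left_mono bounded_by_funpow[OF assms] N_nonneg)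
  finally show ?thesis by (simp add: mult_ac)
qed

lemma bounded_wrt_iff_bounded_by: "bounded_wrt N T \<longleftrightarrow> (\<exists>r. bounded_by T r)"
proof
  assume "bounded_wrt N T"
  then obtain K where K: "\<And>x. N (T x) \<le> K * N x" unfolding bounded_wrt_def by blast
  have "N (T x) \<le> max K 0 * N x" for x
    using K[of x] mult_right_mono[OF max.cobounded1[of K 0] N_nonneg[of x]] by linarith
  then show "\<exists>r. bounded_by T r" unfolding bounded_by_def by (intro exI[of _ "max K 0"]) auto
qed (auto simp: bounded_by_def bounded_wrt_def)

lemma self_adjoint_wrtD: "self_adjoint_wrt p T \<Longrightarrow> p (T x) y = p x (T y)"
  by (simp add: self_adjoint_wrt_def)

lemma self_adjoint_funpow: "self_adjoint_wrt p T \<Longrightarrow> p ((T ^^ n) x) y = p x ((T ^^ n) y)"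
proof (induction n arbitrary: x y)
  case (Suc n)
  have "p ((T ^^ Suc n) x) y = p ((T ^^ n) x) (T y)" using self_adjoint_wrtD[OF Suc.prems] by simp
  also have "\<dots> = p x ((T ^^ Suc n) y)" using Suc by (simp add: funpow_swap1)
  finally show ?case .
qed simp

text \<open>Sums of operator power series are characterised weakly, through the functionals
  \<open>\<langle>w, \<cdot>\<rangle>\<close>, since the carrier has no topology of its own; when no such sum exists the
  value is an arbitrary choice.\<close>
definition op_series :: "real fps \<Rightarrow> ('a \<Rightarrow> 'a) \<Rightarrow> 'a \<Rightarrow> 'a" where
  "op_series A T x = (SOME y. \<forall>w. (\<lambda>n. of_real (A $ n) * p w ((T ^^ n) x)) sums p w y)"

end

locale hilbert_form = ip_space +
  assumes complete: "complete_wrt (form_norm p)"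
begin

lemma ip_tendsto_right:
  assumes "(\<lambda>n. N (X n - y)) \<longlonglongrightarrow> 0"
  shows "(\<lambda>n. p w (X n)) \<longlonglongrightarrow> p w y"
proof (rule LIM_zero_cancel, rule tendsto_norm_zero_cancel)
  have bound: "norm (p w (X n) - p w y) \<le> N w * N (X n - y)" for n
    using Cauchy_Schwarz[of w "X n - y"] by (simp add: ip_diff_right)
  show "(\<lambda>n. norm (p w (X n) - p w y)) \<longlonglongrightarrow> 0"
    by (rule real_tendsto_sandwich[OF _ _ tendsto_const
          tendsto_mult_right_zero[OF assms, of "N w"]])
       (simp_all add: bound)
qed

lemma abs_summable_converges:
  assumes "summable (\<lambda>k. N (z k))"
  shows "\<exists>y. (\<lambda>n. N ((\<Sum>k<n. z k) - y)) \<longlonglongrightarrow> 0"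
proof -
  define S where "S n = (\<Sum>k<n. z k)" for n
  have tail: "N (S m - S n) \<le> (\<Sum>k\<in>{m..<n}. N (z k))" if "m \<le> n" for m n
  proof -
    have "S n = S m + (\<Sum>k\<in>{m..<n}. z k)"
      using sum.atLeastLessThan_concat[of 0 m n z] that by (simp add: S_def atLeast0LessThan)
    then have "N (S m - S n) = N (- (\<Sum>k\<in>{m..<n}. z k))"
      by simp
    also have "\<dots> = N (\<Sum>k\<in>{m..<n}. z k)" by (rule N_minus)
    also have "\<dots> \<le> (\<Sum>k\<in>{m..<n}. N (z k))" by (rule N_sum)
    finally show ?thesis .
  qed
  have "\<exists>M. \<forall>m\<ge>M. \<forall>n\<ge>M. N (S m - S n) < e" if "e > 0" for e
  proof -
    from assms[unfolded summable_Cauchy] that obtain M where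
      M: "\<And>m n. m \<ge> M \<Longrightarrow> norm (\<Sum>k\<in>{m..<n}. N (z k)) < e" by blast
    have "N (S m - S n) < e" if "m \<ge> M" "n \<ge> M" for m n
    proof (cases "m \<le> n")
      case True
      then show ?thesis using tail[OF True] M[OF that(1), of n] by simp
    next
      case False
      have "N (S m - S n) = N (S n - S m)"
        using N_minus[of "S n - S m"] by simp
      then show ?thesis
        using False tail[of n m] M[OF that(2), of m] by simp
    qed
    then show ?thesis by blast
  qed
  then obtain y where "(\<lambda>n. N (S n - y)) \<longlonglongrightarrow> 0"
    using complete unfolding complete_wrt_def by blast
  then show ?thesis unfolding S_def by blast
qed

lemma ip_sums_right:
  assumes "(\<lambda>n. N ((\<Sum>k<n. z k) - y)) \<longlonglongrightarrow> 0"
  shows "(\<lambda>k. p w (z k)) sums p w y"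
  unfolding sums_def using ip_tendsto_right[OF assms, of w] by (simp add: ip_sum_right)

lemma op_series_sums:
  assumes T: "bounded_by T r" and A: "summable (\<lambda>n. \<bar>A $ n\<bar> * r ^ n)"
  shows "(\<lambda>n. of_real (A $ n) * p w ((T ^^ n) x)) sums p w (op_series A T x)"
proof -
  define z where "z n = sc (of_real (A $ n)) ((T ^^ n) x)" for n
  have "summable (\<lambda>n. N (z n))"
  proof (rule summable_comparison_test[OF _ summable_mult2[OF A, of "N x"]])
    show "\<exists>M. \<forall>n\<ge>M. norm (N (z n)) \<le> \<bar>A $ n\<bar> * r ^ n * N x"
      using bounded_by_funpow[OF T]
      by (auto simp: z_def N_scale N_nonneg mult.assoc intro!: mult_left_mono)
  qed
  then obtain y where "(\<lambda>n. N ((\<Sum>k<n. z k) - y)) \<longlonglongrightarrow> 0"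
    using abs_summable_converges by blast
  then have "\<forall>w. (\<lambda>n. of_real (A $ n) * p w ((T ^^ n) x)) sums p w y"
    using ip_sums_right[of z y] by (simp add: z_def ip_scale_right)
  then show ?thesis
    unfolding op_series_def by (rule someI2) blast
qed

lemma op_series_eqI:
  assumes "bounded_by T r" "summable (\<lambda>n. \<bar>A $ n\<bar> * r ^ n)"
    and "\<And>w. (\<lambda>n. of_real (A $ n) * p w ((T ^^ n) x)) sums p w y"
  shows "op_series A T x = y"
  using op_series_sums[OF assms(1,2)] assms(3) sums_unique2 by (metis eq_if_ip_right_eq)

lemma bounded_by_op_series:
  assumes T: "bounded_by T r" and A: "summable (\<lambda>n. \<bar>A $ n\<bar> * r ^ n)"
  shows "bounded_by (op_series A T) (\<Sum>n. \<bar>A $ n\<bar> * r ^ n)"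
proof -
  define \<alpha> where "\<alpha> = (\<Sum>n. \<bar>A $ n\<bar> * r ^ n)"
  have \<alpha>: "\<alpha> \<ge> 0"
    unfolding \<alpha>_def using A bounded_by_nonneg[OF T] by (intro suminf_nonneg) auto
  have "N y \<le> \<alpha> * N x" if y: "y = op_series A T x" for x y
  proof -
    let ?f = "\<lambda>n. of_real (A $ n) * p y ((T ^^ n) x)"
    have f: "norm (?f n) \<le> \<bar>A $ n\<bar> * r ^ n * (N y * N x)" for n
      using mult_left_mono[OF ip_funpow_le[OF T, of y n x] abs_ge_zero[of "A $ n"]]
      by (simp add: norm_mult mult_ac)
    have g: "summable (\<lambda>n. \<bar>A $ n\<bar> * r ^ n * (N y * N x))" by (rule summable_mult2[OF A])
    have fs: "summable (\<lambda>n. norm (?f n))"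
      by (rule summable_comparison_test[OF _ g]) (use f in auto)
    have "(N y)\<^sup>2 \<le> cmod (p y y)" by (simp add: N_square complex_Re_le_cmod)
    also have "p y y = (\<Sum>n. ?f n)"
      using op_series_sums[OF T A, of y x] y by (simp add: sums_iff)
    also have "cmod (\<Sum>n. ?f n) \<le> (\<Sum>n. norm (?f n))" by (rule summable_norm[OF fs])
    also have "\<dots> \<le> (\<Sum>n. \<bar>A $ n\<bar> * r ^ n * (N y * N x))" by (rule suminf_le[OF f fs g])
    also have "\<dots> = N y * (\<alpha> * N x)"
      unfolding \<alpha>_def using suminf_mult2[OF A, of "N y * N x"] by (simp add: mult_ac)
    finally have "N y * N y \<le> N y * (\<alpha> * N x)" by (simp add: power2_eq_square)
    then show ?thesis
      using N_nonneg[of y] N_nonneg[of x] \<alpha>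
      by (cases "N y = 0") (auto simp: mult_le_cancel_left)
  qed
  with \<alpha> show ?thesis unfolding bounded_by_def \<alpha>_def by blast
qed

lemma lin_op_series:
  assumes T: "bounded_by T r" "lin T" and A: "summable (\<lambda>n. \<bar>A $ n\<bar> * r ^ n)"
  shows "lin (op_series A T)"
proof (rule linI)
  note sums = op_series_sums[OF T(1) A]
  fix x y c
  show "op_series A T (x + y) = op_series A T x + op_series A T y"
  proof (rule op_series_eqI[OF T(1) A])
    fix w
    show "(\<lambda>n. of_real (A $ n) * p w ((T ^^ n) (x + y)))
        sums p w (op_series A T x + op_series A T y)"
      using sums_add[OF sums[of w x] sums[of w y]]
      by (simp add: lin_add[OF lin_funpow[OF T(2)]] ip_add_right distrib_left)
  qed
  show "op_series A T (sc c x) = sc c (op_series A T x)"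
  proof (rule op_series_eqI[OF T(1) A])
    fix w
    show "(\<lambda>n. of_real (A $ n) * p w ((T ^^ n) (sc c x))) sums p w (sc c (op_series A T x))"
      using sums_mult[OF sums[of w x], of c]
      by (simp add: lin_scale[OF lin_funpow[OF T(2)]] ip_scale_right mult.left_commute)
  qed
qed

lemma self_adjoint_op_series:
  assumes T: "bounded_by T r" "self_adjoint_wrt p T" and A: "summable (\<lambda>n. \<bar>A $ n\<bar> * r ^ n)"
  shows "self_adjoint_wrt p (op_series A T)"
  unfolding self_adjoint_wrt_def
proof (intro allI)
  fix x y
  have "(\<lambda>n. of_real (A $ n) * p y ((T ^^ n) x)) sums p y (op_series A T x)"
    by (rule op_series_sums[OF T(1) A])
  then have "(\<lambda>n. cnj (of_real (A $ n) * p y ((T ^^ n) x))) sums cnj (p y (op_series A T x))"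
    by (simp only: sums_cnj)
  then have "(\<lambda>n. of_real (A $ n) * p x ((T ^^ n) y)) sums p (op_series A T x) y"
    by (simp add: ip_cnj[of y] self_adjoint_funpow[OF T(2)])
  moreover have "(\<lambda>n. of_real (A $ n) * p x ((T ^^ n) y)) sums p x (op_series A T y)"
    by (rule op_series_sums[OF T(1) A])
  ultimately show "p (op_series A T x) y = p x (op_series A T y)"
    using sums_unique2 by blast
qed

lemma op_series_commute:
  assumes T: "bounded_by T r" and A: "summable (\<lambda>n. \<bar>A $ n\<bar> * r ^ n)"
    and S: "self_adjoint_wrt p S" "\<And>x. S (T x) = T (S x)"
  shows "S (op_series A T x) = op_series A T (S x)"
proof (rule eq_if_ip_right_eq)
  fix w
  have "p (S w) ((T ^^ n) x) = p w ((T ^^ n) (S x))" for n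
    using self_adjoint_wrtD[OF S(1)] funpow_commute[of S T, OF S(2)] by simp
  then have "(\<lambda>n. of_real (A $ n) * p w ((T ^^ n) (S x))) sums p (S w) (op_series A T x)"
    using op_series_sums[OF T A, of "S w" x] by simp
  then show "p w (S (op_series A T x)) = p w (op_series A T (S x))"
    using op_series_sums[OF T A, of w "S x"] sums_unique2 self_adjoint_wrtD[OF S(1)] by metis
qed


lemma op_series_geometric:
  fixes x :: 'a
  assumes T: "bounded_by T r" "self_adjoint_wrt p T" and r: "r < 1"
  defines "y \<equiv> op_series (Abs_fps (\<lambda>_. 1)) T x"
  shows "y - T y = x"
proof (rule eq_if_ip_right_eq)
  fix w
  have sum: "summable (\<lambda>n. \<bar>Abs_fps (\<lambda>_. 1::real) $ n\<bar> * r ^ n)"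
    using bounded_by_nonneg[OF T(1)] r by simp
  define g where "g = (\<lambda>n. p w ((T ^^ n) x))"
  have "g sums p w y"
    using op_series_sums[OF T(1) sum, of w x] by (simp add: y_def g_def)
  then have "(\<lambda>n. g (Suc n)) sums (p w y - g 0)"
    by (simp add: sums_Suc_iff)
  moreover have "(\<lambda>n. g (Suc n)) sums p (T w) y"
    using op_series_sums[OF T(1) sum, of "T w" x]
    by (simp add: y_def g_def self_adjoint_wrtD[OF T(2), of w] funpow_swap1)
  ultimately have "p (T w) y = p w y - g 0" using sums_unique2 by blast
  then show "p w (y - T y) = p w x"
    by (simp add: ip_diff_right self_adjoint_wrtD[OF T(2), symmetric] g_def)
qed
end

section \<open>Rearranging dominated double series\<close>

lemma has_sum_suminf_nonneg:
  fixes f :: "nat \<Rightarrow> real"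
  assumes "\<And>n. f n \<ge> 0" "summable f"
  shows "(f has_sum suminf f) UNIV"
  using sums_nonneg_imp_has_sum[OF summable_sums[OF assms(2)]] assms(1) by blast

lemma abs_summable_on_dominated:
  fixes F :: "nat \<times> nat \<Rightarrow> complex"
  assumes F: "\<And>m n. norm (F (m, n)) \<le> G m n" and G0: "\<And>m n. G m n \<ge> 0"
    and rows: "\<And>m. summable (G m)" and total: "summable (\<lambda>m. suminf (G m))"
  shows "(\<lambda>x. norm (F x)) summable_on UNIV"
proof -
  have row_sums: "(G m has_sum suminf (G m)) UNIV" for m
    by (rule has_sum_suminf_nonneg[OF G0 rows])
  have total_nonneg: "suminf (G m) \<ge> 0" for m
    using suminf_nonneg[OF rows] G0 by blast
  then have "(\<lambda>m. suminf (G m)) summable_on UNIV"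
    using has_sum_suminf_nonneg[OF _ total] has_sum_imp_summable by blast
  moreover have "(\<lambda>n. norm (G m n)) summable_on UNIV"
    and "infsum (\<lambda>n. norm (G m n)) UNIV = suminf (G m)"
    for m using row_sums[of m] G0 by (simp_all add: has_sum_iff)
  ultimately have G: "(\<lambda>x. norm ((\<lambda>(m, n). G m n) x)) summable_on UNIV \<times> UNIV"
    unfolding Infinite_Sum.abs_summable_on_Sigma_iff by (simp add: total_nonneg)
  show ?thesis
  proof (rule Infinite_Sum.abs_summable_on_comparison_test[OF G[unfolded UNIV_Times_UNIV]])
    fix x :: "nat \<times> nat"
    show "norm (F x) \<le> norm ((\<lambda>(m, n). G m n) x)"
      using F[of "fst x" "snd x"] G0[of "fst x" "snd x"] by (simp add: case_prod_beta)
  qed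
qed

lemma dominated_double_sums:
  fixes F :: "nat \<times> nat \<Rightarrow> complex"
  assumes F: "\<And>m n. norm (F (m, n)) \<le> G m n" and G0: "\<And>m n. G m n \<ge> 0"
    and rows: "\<And>m. summable (G m)" and total: "summable (\<lambda>m. suminf (G m))"
  shows "(F has_sum infsum F UNIV) UNIV"
    and "(\<lambda>m. \<Sum>n. F (m, n)) sums infsum F UNIV"
    and "(\<lambda>n. \<Sum>m. F (m, n)) sums infsum F UNIV"
proof -
  show F_sum: "(F has_sum infsum F UNIV) UNIV"
    by (rule has_sum_infsum[OF abs_summable_summable[OF abs_summable_on_dominated[OF assms]]])
  have row_norms: "summable (\<lambda>n. norm (F (m, n)))" for m
    by (rule summable_comparison_test[OF _ rows[of m]]) (simp add: F)
  have row: "((\<lambda>n. F (m, n)) has_sum (\<Sum>n. F (m, n))) UNIV" for m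
    using norm_summable_imp_has_sum[OF row_norms summable_sums[OF summable_norm_cancel]] row_norms .
  have "norm (F (m, n)) \<le> suminf (G m)" for m n
    using F[of m n] sum_le_suminf[of "G m" "{n}"] rows G0 by simp
  then have col_norms: "summable (\<lambda>m. norm (F (m, n)))" for n
    by (intro summable_comparison_test[OF _ total]) simp
  have col: "((\<lambda>m. F (m, n)) has_sum (\<Sum>m. F (m, n))) UNIV" for n
    using norm_summable_imp_has_sum[OF col_norms summable_sums[OF summable_norm_cancel]] col_norms .
  show "(\<lambda>m. \<Sum>n. F (m, n)) sums infsum F UNIV"
  proof (rule has_sum_imp_sums, rule has_sum_Sigma'[where B="\<lambda>_. UNIV"])
    show "(F has_sum infsum F UNIV) (Sigma UNIV (\<lambda>_. UNIV))" using F_sum by simp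
  qed (rule row)
  show "(\<lambda>n. \<Sum>m. F (m, n)) sums infsum F UNIV"
  proof (rule has_sum_imp_sums, rule has_sum_Sigma'[where B="\<lambda>_. UNIV"])
    show "((\<lambda>(n, m). F (m, n)) has_sum infsum F UNIV) (Sigma UNIV (\<lambda>_. UNIV))"
      using F_sum has_sum_swap[where f=F and S="infsum F UNIV" and A=UNIV and B=UNIV] by simp
  qed (use col in simp)
qed

lemma has_sum_antidiagonal_sums:
  fixes F :: "nat \<times> nat \<Rightarrow> complex"
  assumes "(F has_sum S) UNIV"
  shows "(\<lambda>q. \<Sum>k\<le>q. F (k, q - k)) sums S"
proof -
  define T where "T = Sigma (UNIV :: nat set) (\<lambda>q. {..q})"
  have "(F has_sum S) UNIV = ((\<lambda>(q, k). F (k, q - k)) has_sum S) T"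
    by (rule has_sum_reindex_bij_witness[where i="\<lambda>(q, k). (k, q - k)" and j="\<lambda>(m, n). (m + n, m)"])
       (auto simp: T_def)
  with assms have diagonals: "((\<lambda>(q, k). F (k, q - k)) has_sum S) (Sigma UNIV (\<lambda>q. {..q}))"
    by (simp add: T_def)
  have "((\<lambda>q. \<Sum>k\<le>q. F (k, q - k)) has_sum S) UNIV"
    by (rule has_sum_Sigma'[OF diagonals]) simp
  then show ?thesis by (rule has_sum_imp_sums)
qed

lemma summable_dominated_weights:
  fixes g :: "nat \<Rightarrow> complex"
  assumes "\<And>n. b n \<ge> 0" "summable (\<lambda>n. b n * r ^ n)" "\<And>n. cmod (g n) \<le> B * r ^ n"
  shows "summable (\<lambda>n. of_real (b n) * g n)"
proof (rule summable_norm_cancel)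
  show "summable (\<lambda>n. norm (of_real (b n) * g n))"
  proof (rule summable_comparison_test[OF _ summable_mult[OF assms(2), of B]])
    have "norm (of_real (b n) * g n) \<le> B * (b n * r ^ n)" for n
      using mult_left_mono[OF assms(3) assms(1), of n] assms(1)[of n] by (simp add: norm_mult mult_ac)
    then show "\<exists>N. \<forall>n\<ge>N. norm (norm (of_real (b n) * g n)) \<le> B * (b n * r ^ n)" by simp
  qed
qed

lemma Cauchy_product_sums_dominated:
  fixes a b :: "nat \<Rightarrow> real" and g :: "nat \<Rightarrow> complex"
  assumes a0: "\<And>n. a n \<ge> 0" and b0: "\<And>n. b n \<ge> 0" and r0: "r \<ge> 0"
    and sa: "summable (\<lambda>n. a n * r ^ n)" and sb: "summable (\<lambda>n. b n * r ^ n)"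
    and g: "\<And>n. cmod (g n) \<le> B * r ^ n"
  shows "(\<lambda>q. of_real (\<Sum>i\<le>q. a i * b (q - i)) * g q) sums
           (\<Sum>m. of_real (a m) * (\<Sum>n. of_real (b n) * g (m + n)))"
proof -
  have B0: "B \<ge> 0" using g[of 0] norm_ge_zero[of "g 0"] by (simp del: norm_ge_zero)
  define F where "F = (\<lambda>(m, n). of_real (a m) * (of_real (b n) * g (m + n)))"
  define G where "G m n = B * (a m * r ^ m) * (b n * r ^ n)" for m n
  have bound: "norm (F (m, n)) \<le> G m n" for m n
  proof -
    have "norm (F (m, n)) = a m * (b n * cmod (g (m + n)))"
      using a0 b0 by (simp add: F_def norm_mult)
    also have "\<dots> \<le> a m * (b n * (B * r ^ (m + n)))"
      using a0 b0 g by (intro mult_left_mono) auto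
    finally show ?thesis by (simp add: G_def power_add mult_ac)
  qed
  have G0: "G m n \<ge> 0" for m n using B0 a0 b0 r0 by (simp add: G_def)
  have rows: "summable (G m)" for m
    unfolding G_def by (intro summable_mult sb)
  have total: "summable (\<lambda>m. suminf (G m))"
    unfolding G_def suminf_mult[OF sb] by (intro summable_mult2 summable_mult sa)
  note F_sums = dominated_double_sums(1,2)[OF bound G0 rows total]
  have "cmod (g (m + n)) \<le> (B * r ^ m) * r ^ n" for m n
    using g[of "m + n"] by (simp add: power_add mult_ac)
  then have inner: "summable (\<lambda>n. of_real (b n) * g (m + n))" for m
    by (rule summable_dominated_weights[OF b0 sb])
  have "(\<lambda>m. of_real (a m) * (\<Sum>n. of_real (b n) * g (m + n))) sums infsum F UNIV"
    using F_sums(2) by (simp add: F_def suminf_mult[OF inner])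
  moreover have "(\<lambda>q. \<Sum>k\<le>q. F (k, q - k)) sums infsum F UNIV"
    by (rule has_sum_antidiagonal_sums[OF F_sums(1)])
  ultimately show ?thesis
    by (simp add: F_def sums_iff sum_distrib_right mult.assoc)
qed

lemma exp_series_interchange:
  fixes c :: "nat \<Rightarrow> nat \<Rightarrow> real" and g :: "nat \<Rightarrow> complex"
  assumes c0: "\<And>k n. c k n \<ge> 0" and c_low: "\<And>k n. n < k \<Longrightarrow> c k n = 0"
    and c_sums: "\<And>k. (\<lambda>n. c k n * r ^ n) sums (\<alpha> ^ k)" and r0: "r \<ge> 0"
    and g: "\<And>n. cmod (g n) \<le> B * r ^ n"
  shows "\<exists>S. (\<lambda>k. of_real (1 / fact k) * (\<Sum>n. of_real (c k n) * g n)) sums S \<and>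
             (\<lambda>n. of_real (\<Sum>k\<le>n. c k n / fact k) * g n) sums S"
proof -
  have B0: "B \<ge> 0" using g[of 0] norm_ge_zero[of "g 0"] by (simp del: norm_ge_zero)
  define F where "F = (\<lambda>(k, n). of_real (1 / fact k) * (of_real (c k n) * g n))"
  define G where "G k n = B * (c k n * r ^ n) / fact k" for k n
  have bound: "norm (F (k, n)) \<le> G k n" for k n
  proof -
    have "norm (F (k, n)) = c k n * cmod (g n) / fact k"
      using c0 by (simp add: F_def norm_mult norm_divide)
    also have "\<dots> \<le> c k n * (B * r ^ n) / fact k"
      using c0 g by (intro divide_right_mono mult_left_mono) auto
    finally show ?thesis by (simp add: G_def mult_ac)
  qed
  have G0: "G k n \<ge> 0" for k n using B0 c0 r0 by (simp add: G_def)
  have G_sums: "G k sums (B * (inverse (fact k) * \<alpha> ^ k))" for k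
    unfolding G_def using sums_divide[OF sums_mult[OF c_sums[of k], of B], of "fact k"]
    by (simp add: divide_inverse mult_ac)
  have total: "summable (\<lambda>k. suminf (G k))"
    using G_sums by (simp add: sums_iff summable_mult summable_exp)
  note F_sums = dominated_double_sums(2,3)[OF bound G0 sums_summable[OF G_sums] total]
  have inner: "summable (\<lambda>n. of_real (c k n) * g n)" for k
    using summable_dominated_weights[OF c0 sums_summable[OF c_sums] g] .
  have "(\<Sum>n. F (k, n)) = of_real (1 / fact k) * (\<Sum>n. of_real (c k n) * g n)" for k
    by (simp add: F_def suminf_divide[OF inner])
  moreover have "(\<Sum>k. F (k, n)) = of_real (\<Sum>k\<le>n. c k n / fact k) * g n" for n
  proof -
    have "(\<Sum>k. F (k, n)) = (\<Sum>k\<le>n. F (k, n))"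
      by (rule suminf_finite) (auto simp: F_def c_low)
    then show ?thesis by (simp add: F_def sum_distrib_right)
  qed
  ultimately show ?thesis using F_sums by auto
qed

lemma fps_mult_nth_nonneg:
  fixes A B :: "real fps"
  shows "(\<And>n. A $ n \<ge> 0) \<Longrightarrow> (\<And>n. B $ n \<ge> 0) \<Longrightarrow> (A * B) $ n \<ge> 0"
  by (simp add: fps_mult_nth sum_nonneg)

lemma fps_mult_sums:
  fixes A B :: "real fps"
  assumes A: "\<And>n. A $ n \<ge> 0" "summable (\<lambda>n. A $ n * r ^ n)"
    and B: "\<And>n. B $ n \<ge> 0" "summable (\<lambda>n. B $ n * r ^ n)" and r0: "r \<ge> 0"
  shows "(\<lambda>n. (A * B) $ n * r ^ n) sums ((\<Sum>n. A $ n * r ^ n) * (\<Sum>n. B $ n * r ^ n))"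
proof -
  have terms: "(A $ i * r ^ i) * (B $ (n - i) * r ^ (n - i)) = (A $ i * B $ (n - i)) * r ^ n"
    if "i \<le> n" for i n
    using that by (simp add: mult_ac power_add[symmetric])
  have "(\<Sum>i\<le>n. (A $ i * r ^ i) * (B $ (n - i) * r ^ (n - i))) = (A * B) $ n * r ^ n" for n
    unfolding fps_mult_nth atLeast0AtMost sum_distrib_right by (rule sum.cong) (simp_all add: terms)
  moreover have "(\<lambda>n. \<Sum>i\<le>n. (A $ i * r ^ i) * (B $ (n - i) * r ^ (n - i))) sums
      ((\<Sum>n. A $ n * r ^ n) * (\<Sum>n. B $ n * r ^ n))"
    by (rule Cauchy_product_sums) (use A B r0 in auto)
  ultimately show ?thesis by simp
qed

lemma fps_power_sums_nonneg:
  fixes A :: "real fps"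
  assumes A0: "\<And>n. A $ n \<ge> 0" and r0: "r \<ge> 0" and A: "summable (\<lambda>n. A $ n * r ^ n)"
  shows "(\<lambda>n. (A ^ k) $ n * r ^ n) sums (\<Sum>n. A $ n * r ^ n) ^ k \<and> (\<forall>n. (A ^ k) $ n \<ge> 0)"
proof (induction k)
  case 0
  have "(\<lambda>n. (A ^ 0) $ n * r ^ n) = (\<lambda>n. if n = 0 then 1 else 0)" by auto
  then show ?case using sums_single[of 0 "\<lambda>_. 1::real"] by simp
next
  case (Suc k)
  then show ?case
    using fps_mult_sums[OF A0 A _ sums_summable r0, of "A ^ k"]
      fps_mult_nth_nonneg[OF A0, of "A ^ k"]
    by (simp add: sums_iff)
qed

lemma fps_exp_compose_nth:
  fixes A :: "real fps"
  shows "(fps_exp 1 oo A) $ n = (\<Sum>k\<le>n. (A ^ k) $ n / fact k)"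
  unfolding fps_compose_nth atLeast0AtMost by (rule sum.cong) simp_all

lemma summable_fps_exp_compose:
  fixes A :: "real fps"
  assumes A0: "\<And>n. A $ n \<ge> 0" "A $ 0 = 0" and r0: "r \<ge> 0" and A: "summable (\<lambda>n. A $ n * r ^ n)"
  shows "summable (\<lambda>n. \<bar>(fps_exp 1 oo A) $ n\<bar> * r ^ n)"
proof -
  have powers: "(\<lambda>n. (A ^ k) $ n * r ^ n) sums (\<Sum>n. A $ n * r ^ n) ^ k" "(A ^ k) $ n \<ge> 0" for k n
    using fps_power_sums_nonneg[OF A0(1) r0 A] by blast+
  have low: "n < k \<Longrightarrow> (A ^ k) $ n = 0" for k n
    using startsby_zero_power_prefix[OF A0(2)] by blast
  have "cmod (complex_of_real (r ^ n)) \<le> 1 * r ^ n" for n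
    using r0 by (simp add: norm_power)
  then obtain S where "(\<lambda>n. of_real (\<Sum>k\<le>n. (A ^ k) $ n / fact k) * complex_of_real (r ^ n)) sums S"
    using exp_series_interchange[where c="\<lambda>k n. (A ^ k) $ n" and g="\<lambda>n. of_real (r ^ n)",
        OF powers(2) low powers(1) r0] by blast
  then have "summable (\<lambda>n. complex_of_real ((\<Sum>k\<le>n. (A ^ k) $ n / fact k) * r ^ n))"
    by (auto simp: sums_iff)
  moreover have "\<bar>(fps_exp 1 oo A) $ n\<bar> = (\<Sum>k\<le>n. (A ^ k) $ n / fact k)" for n
    using powers(2) by (simp add: fps_exp_compose_nth sum_nonneg)
  ultimately show ?thesis
    by (simp only: summable_complex_of_real)
qed

context hilbert_form
begin

lemma op_series_mult:
  assumes T: "bounded_by T r" "self_adjoint_wrt p T"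
    and A: "\<And>n. A $ n \<ge> 0" "summable (\<lambda>n. A $ n * r ^ n)"
    and B: "\<And>n. B $ n \<ge> 0" "summable (\<lambda>n. B $ n * r ^ n)"
  shows "op_series A T (op_series B T x) = op_series (A * B) T x"
proof (rule op_series_eqI[OF T(1), symmetric])
  have r0: "r \<ge> 0" by (rule bounded_by_nonneg[OF T(1)])
  show "summable (\<lambda>n. \<bar>(A * B) $ n\<bar> * r ^ n)"
    using fps_mult_sums[OF A B r0] fps_mult_nth_nonneg[OF A(1) B(1)] by (simp add: sums_iff)
  fix w
  define g where "g q = p w ((T ^^ q) x)" for q
  have "(\<lambda>n. of_real (B $ n) * g (m + n)) sums p ((T ^^ m) w) (op_series B T x)" for m
    using op_series_sums[OF T(1), of B "(T ^^ m) w" x] B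
    by (simp add: g_def self_adjoint_funpow[OF T(2)] funpow_add)
  then have "(\<lambda>m. of_real (A $ m) * (\<Sum>n. of_real (B $ n) * g (m + n)))
      sums p w (op_series A T (op_series B T x))"
    using op_series_sums[OF T(1), of A w "op_series B T x"] A
    by (simp add: sums_iff self_adjoint_funpow[OF T(2)])
  moreover have g_bound: "cmod (g q) \<le> (N w * N x) * r ^ q" for q
    unfolding g_def by (rule ip_funpow_le[OF T(1)])
  have "(\<lambda>q. of_real (\<Sum>i\<le>q. A $ i * B $ (q - i)) * g q)
      sums (\<Sum>m. of_real (A $ m) * (\<Sum>n. of_real (B $ n) * g (m + n)))"
    by (rule Cauchy_product_sums_dominated[OF A(1) B(1) r0 A(2) B(2) g_bound])
  ultimately show "(\<lambda>q. of_real ((A * B) $ q) * p w ((T ^^ q) x))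
      sums p w (op_series A T (op_series B T x))"
    by (simp add: g_def sums_iff fps_mult_nth atLeast0AtMost)
qed

lemma op_series_power:
  assumes T: "bounded_by T r" "self_adjoint_wrt p T"
    and A0: "\<And>n. A $ n \<ge> 0" and A: "summable (\<lambda>n. A $ n * r ^ n)"
  shows "(op_series A T ^^ k) x = op_series (A ^ k) T x"
proof (induction k)
  case 0
  show ?case
  proof (rule op_series_eqI[OF T(1), symmetric])
    show "summable (\<lambda>n. \<bar>(A ^ 0) $ n\<bar> * r ^ n)"
      by (rule summable_finite[of "{0}"]) auto
    fix w
    have "(\<lambda>n. of_real ((A ^ 0) $ n) * p w ((T ^^ n) x)) = (\<lambda>n. if n = 0 then p w x else 0)"
      by auto
    then show "(\<lambda>n. of_real ((A ^ 0) $ n) * p w ((T ^^ n) x)) sums p w ((op_series A T ^^ 0) x)"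
      using sums_single[of 0 "\<lambda>_. p w x"] by simp
  qed
next
  case (Suc k)
  have "(A ^ k) $ n \<ge> 0" "summable (\<lambda>n. (A ^ k) $ n * r ^ n)" for n
    using fps_power_sums_nonneg[OF A0 bounded_by_nonneg[OF T(1)] A, of k] by (auto simp: sums_iff)
  then show ?case
    using Suc op_series_mult[OF T A0 A] by simp
qed

lemma exp_series_converges:
  assumes "bounded_by Q \<beta>"
  shows "\<exists>y. (\<lambda>n. N ((\<Sum>k<n. sc (inverse (fact k)) ((Q ^^ k) x)) - y)) \<longlonglongrightarrow> 0"
proof (rule abs_summable_converges)
  have "N (sc (inverse (fact k)) ((Q ^^ k) x)) \<le> inverse (fact k) * \<beta> ^ k * N x" for k
    using bounded_by_funpow[OF assms, of k x]
    by (simp add: N_scale norm_inverse mult.assoc mult_left_mono)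
  then show "summable (\<lambda>k. N (sc (inverse (fact k)) ((Q ^^ k) x)))"
    by (intro summable_comparison_test[OF _ summable_mult2[OF summable_exp[of \<beta>], of "N x"]])
       (auto simp: N_nonneg)
qed

lemma exp_series_op_series:
  assumes T: "bounded_by T r" "self_adjoint_wrt p T"
    and A0: "\<And>n. A $ n \<ge> 0" "A $ 0 = 0" and A: "summable (\<lambda>n. A $ n * r ^ n)"
  shows "exp_series_to sc N (op_series A T) x (op_series (fps_exp 1 oo A) T x)"
proof -
  have r0: "r \<ge> 0" by (rule bounded_by_nonneg[OF T(1)])
  have powers: "(\<lambda>n. (A ^ k) $ n * r ^ n) sums (\<Sum>n. A $ n * r ^ n) ^ k" "(A ^ k) $ n \<ge> 0" for k n
    using fps_power_sums_nonneg[OF A0(1) r0 A] by blast+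
  have low: "n < k \<Longrightarrow> (A ^ k) $ n = 0" for k n
    using startsby_zero_power_prefix[OF A0(2)] by blast
  have "summable (\<lambda>n. \<bar>A $ n\<bar> * r ^ n)"
    using A A0 by simp
  then have "bounded_by (op_series A T) (\<Sum>n. \<bar>A $ n\<bar> * r ^ n)"
    by (rule bounded_by_op_series[OF T(1)])
  then obtain y where y: "(\<lambda>n. N ((\<Sum>k<n. sc (inverse (fact k)) ((op_series A T ^^ k) x)) - y))
      \<longlonglongrightarrow> 0"
    using exp_series_converges by blast
  have "y = op_series (fps_exp 1 oo A) T x"
  proof (rule op_series_eqI[OF T(1) summable_fps_exp_compose[OF A0 r0 A], symmetric])
    fix w
    define g where "g n = p w ((T ^^ n) x)" for n
    have "cmod (g n) \<le> (N w * N x) * r ^ n" for n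
      unfolding g_def by (rule ip_funpow_le[OF T(1)])
    then obtain S where
      rows: "(\<lambda>k. of_real (1 / fact k) * (\<Sum>n. of_real ((A ^ k) $ n) * g n)) sums S" and
      cols: "(\<lambda>n. of_real (\<Sum>k\<le>n. (A ^ k) $ n / fact k) * g n) sums S"
      using exp_series_interchange[where c="\<lambda>k n. (A ^ k) $ n", OF powers(2) low powers(1) r0]
      by blast
    have "(\<Sum>n. of_real ((A ^ k) $ n) * g n) = p w ((op_series A T ^^ k) x)" for k
      using op_series_sums[OF T(1), of "A ^ k" w x] powers
      by (simp add: g_def op_series_power[OF T A0(1) A] sums_iff)
    then have "(\<lambda>k. p w (sc (inverse (fact k)) ((op_series A T ^^ k) x))) sums S"
      using rows by (simp add: ip_scale_right divide_inverse mult.commute)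
    with ip_sums_right[OF y] have "p w y = S" using sums_unique2 by blast
    then show "(\<lambda>n. of_real ((fps_exp 1 oo A) $ n) * p w ((T ^^ n) x)) sums p w y"
      using cols by (simp add: g_def fps_exp_compose_nth)
  qed
  then show ?thesis
    using y unfolding exp_series_to_def by simp
qed

end

section \<open>The formal series of \<open>2 artanh\<close>\<close>

text \<open>The series of \<open>log ((1 + X) / (1 - X)) = 2 artanh X\<close> and of \<open>(1 + X) / (1 - X)\<close>.\<close>

definition two_artanh_fps :: "real fps" where
  "two_artanh_fps = Abs_fps (\<lambda>n. if odd n then 2 / of_nat n else 0)"

definition inv_cayley_fps :: "real fps" where
  "inv_cayley_fps = Abs_fps (\<lambda>n. if n = 0 then 1 else 2)"

lemma fps_linear_ode_unique:
  fixes F G B :: "real fps"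
  assumes "fps_deriv F = F * B" "fps_deriv G = G * B" "F $ 0 = G $ 0"
  shows "F = G"
proof (rule fps_ext)
  fix n show "F $ n = G $ n"
  proof (induction n rule: less_induct)
    case (less n)
    show ?case
    proof (cases n)
      case 0 then show ?thesis using assms(3) by simp
    next
      case (Suc m)
      have "(F * B) $ m = (G * B) $ m"
        unfolding fps_mult_nth using less Suc by (intro sum.cong) auto
      then have "fps_deriv F $ m = fps_deriv G $ m" using assms(1,2) by simp
      then show ?thesis using Suc by (simp del: of_nat_Suc)
    qed
  qed
qed

lemma fps_deriv_two_artanh: "fps_deriv two_artanh_fps = Abs_fps (\<lambda>n. if even n then 2 else 0)"
proof (rule fps_ext)
  fix n
  have "real (n+1) \<noteq> 0" by simp
  then show "fps_deriv two_artanh_fps $ n = Abs_fps (\<lambda>n. if even n then 2 else 0) $ n"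
    by (auto simp: two_artanh_fps_def simp del: of_nat_Suc of_nat_add)
qed

lemma one_minus_X_mult_inv_cayley: "(1 - fps_X) * inv_cayley_fps = 1 + fps_X"
  by (rule fps_ext) (auto simp: inv_cayley_fps_def algebra_simps fps_X_mult_nth)

lemma one_minus_X2_mult_deriv_two_artanh: "(1 - fps_X * fps_X) * fps_deriv two_artanh_fps = 2"
proof (rule fps_ext)
  fix n
  show "((1 - fps_X * fps_X) * fps_deriv two_artanh_fps) $ n = (2::real fps) $ n"
    by (cases n; cases "n - 1")
       (auto simp: fps_deriv_two_artanh algebra_simps fps_X_mult_nth numeral_fps_const)
qed

lemma sq_one_minus_X_mult_deriv_inv_cayley:
  "(1 - fps_X) * ((1 - fps_X) * fps_deriv inv_cayley_fps) = 2"
proof -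
  have "(1 - fps_X) * fps_deriv inv_cayley_fps = Abs_fps (\<lambda>n. 2)"
    by (rule fps_ext) (auto simp: inv_cayley_fps_def algebra_simps fps_X_mult_nth)
  moreover have "(1 - fps_X) * Abs_fps (\<lambda>n. 2) = (2::real fps)"
    by (rule fps_ext) (auto simp: algebra_simps fps_X_mult_nth numeral_fps_const)
  ultimately show ?thesis by simp
qed

lemma fps_deriv_inv_cayley: "fps_deriv inv_cayley_fps = inv_cayley_fps * fps_deriv two_artanh_fps"
proof -
  let ?P = "(1 - fps_X) * ((1 - fps_X) * (1 + fps_X)) :: real fps"
  have "?P * fps_deriv inv_cayley_fps = (1 + fps_X) * 2"
  proof -
    have "?P * fps_deriv inv_cayley_fps
        = (1 + fps_X) * ((1 - fps_X) * ((1 - fps_X) * fps_deriv inv_cayley_fps))"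
      by (simp only: ac_simps)
    then show ?thesis using sq_one_minus_X_mult_deriv_inv_cayley by simp
  qed
  moreover have "?P * (inv_cayley_fps * fps_deriv two_artanh_fps) = (1 + fps_X) * 2"
  proof -
    have "?P * (inv_cayley_fps * fps_deriv two_artanh_fps)
        = ((1 - fps_X) * inv_cayley_fps) * ((1 - fps_X * fps_X) * fps_deriv two_artanh_fps)"
      by (simp add: algebra_simps)
    then show ?thesis using one_minus_X_mult_inv_cayley one_minus_X2_mult_deriv_two_artanh by simp
  qed
  moreover have "?P \<noteq> 0"
  proof
    assume "?P = 0" then have "?P $ 0 = 0" by simp
    then show False by (simp add: fps_mult_nth)
  qed
  ultimately show ?thesis by (metis mult_left_cancel)
qed

lemma fps_exp_compose_two_artanh: "fps_exp 1 oo two_artanh_fps = inv_cayley_fps"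
proof (rule fps_linear_ode_unique[where B="fps_deriv two_artanh_fps"])
  have "two_artanh_fps $ 0 = 0" by (simp add: two_artanh_fps_def)
  then show "fps_deriv (fps_exp 1 oo two_artanh_fps)
      = (fps_exp 1 oo two_artanh_fps) * fps_deriv two_artanh_fps"
    by (simp add: fps_compose_deriv)
  show "fps_deriv inv_cayley_fps = inv_cayley_fps * fps_deriv two_artanh_fps"
    by (rule fps_deriv_inv_cayley)
  show "(fps_exp 1 oo two_artanh_fps) $ 0 = inv_cayley_fps $ 0" by (simp add: inv_cayley_fps_def)
qed

lemma two_artanh_fps_nth: "two_artanh_fps $ n = (if odd n then 2 / of_nat n else 0)"
  by (simp add: two_artanh_fps_def)

lemma two_artanh_fps_nonneg: "two_artanh_fps $ n \<ge> 0"
  by (simp add: two_artanh_fps_nth)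

lemma inv_cayley_fps_nth: "inv_cayley_fps $ n = (if n = 0 then 1 else 2)"
  by (simp add: inv_cayley_fps_def)

lemma summable_bounded_coeffs:
  fixes A :: "real fps"
  assumes "\<And>n. \<bar>A $ n\<bar> \<le> 2" "0 \<le> r" "r < 1"
  shows "summable (\<lambda>n. \<bar>A $ n\<bar> * r ^ n)"
proof (rule summable_comparison_test[OF _ summable_mult[OF summable_geometric, of r 2]])
  have "norm (\<bar>A $ n\<bar> * r ^ n) \<le> 2 * r ^ n" for n
    using assms(1)[of n] assms(2) by (simp add: abs_mult mult_right_mono)
  then show "\<exists>N. \<forall>n\<ge>N. norm (\<bar>A $ n\<bar> * r ^ n) \<le> 2 * r ^ n" by blast
qed (use assms in simp)

lemma abs_two_artanh_fps_le: "\<bar>two_artanh_fps $ n\<bar> \<le> 2"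
proof (cases "odd n")
  case True
  then have "n \<ge> 1" by (cases n) auto
  then show ?thesis using True by (simp add: two_artanh_fps_nth field_simps)
qed (simp add: two_artanh_fps_nth)

lemma abs_inv_cayley_fps_le: "\<bar>inv_cayley_fps $ n\<bar> \<le> 2"
  by (simp add: inv_cayley_fps_nth)

section \<open>The logarithm of a uniformly positive operator\<close>

locale positive_invertible_op = hilbert_form +
  fixes U U' :: "'a \<Rightarrow> 'a" and m M :: real
  assumes lin_U: "lin U"
    and U_U': "\<And>x. U (U' x) = x" and U'_U: "\<And>x. U' (U x) = x"
    and self_adjoint_U: "self_adjoint_wrt p U"
    and bounded_U: "bounded_by U M"
    and U_coercive: "\<And>x. Re (p (U x) x) \<ge> m * (N x)\<^sup>2"
    and m_pos: "m > 0"
begin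

definition U1 :: "'a \<Rightarrow> 'a" where "U1 x = U x + x"

lemma lin_U1: "lin U1"
  by (rule linI)
     (simp_all add: U1_def lin_add[OF lin_U] lin_scale[OF lin_U] scale_right_distrib add_ac)

lemma self_adjoint_U1: "self_adjoint_wrt p U1"
  using self_adjoint_U unfolding self_adjoint_wrt_def U1_def by (simp add: ip_add_left ip_add_right)

lemma U1_coercive: "Re (p (U1 x) x) \<ge> (N x)\<^sup>2"
proof -
  have "Re (p (U1 x) x) = Re (p (U x) x) + (N x)\<^sup>2"
    by (simp add: U1_def ip_add_left N_square)
  moreover have "m * (N x)\<^sup>2 \<ge> 0" using m_pos by simp
  ultimately show ?thesis using U_coercive[of x] by linarith
qed

lemma N_U1_le: "N (U1 x) \<le> (M + 1) * N x"
  using N_triangle[of "U x" x] bounded_byD[OF bounded_U, of x] by (simp add: U1_def algebra_simps)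

lemma U1_inj: "U1 x = U1 y \<Longrightarrow> x = y"
proof -
  assume "U1 x = U1 y"
  then have "U1 (x - y) = 0" using lin_diff[OF lin_U1] by simp
  then have "(N (x - y))\<^sup>2 \<le> 0" using U1_coercive[of "x - y"] by simp
  then show ?thesis by (simp add: N_eq_0_iff)
qed

text \<open>With \<open>d = (M + 1)\<^sup>2\<close>, the operator \<open>W = 1 - U1 / d\<close> is a strict contraction, so the
  Neumann series \<open>\<Sum> W\<^sup>n\<close> inverts \<open>U1 / d\<close>.\<close>

definition d :: real where "d = (M + 1)\<^sup>2"
definition W :: "'a \<Rightarrow> 'a" where "W x = x - sc (of_real (1 / d)) (U1 x)"
definition W_bound :: real where "W_bound = sqrt (1 - 1 / d)"

lemma d_ge_1: "d \<ge> 1"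
proof -
  have "M + 1 \<ge> 1" using bounded_by_nonneg[OF bounded_U] by simp
  then have "(M + 1) * (M + 1) \<ge> 1 * 1" by (intro mult_mono) auto
  then show ?thesis by (simp add: d_def power2_eq_square)
qed

lemma W_bound: "0 \<le> W_bound" "W_bound < 1"
  using d_ge_1 by (auto simp: W_bound_def)

lemma self_adjoint_W: "self_adjoint_wrt p W"
  using self_adjoint_U1 unfolding self_adjoint_wrt_def W_def
  by (simp add: ip_diff_left ip_diff_right ip_scale_left ip_scale_right)

lemma bounded_W: "bounded_by W W_bound"
  unfolding bounded_by_def
proof (intro conjI allI)
  show "0 \<le> W_bound" by (rule W_bound(1))
  fix x
  define c where "c = 1 / d"
  have c: "c > 0" "c * d = 1" using d_ge_1 by (simp_all add: c_def)
  have "(N (W x))\<^sup>2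
      = (N x)\<^sup>2 + 2 * Re (p x (- sc (of_real c) (U1 x))) + (N (sc (of_real c) (U1 x)))\<^sup>2"
    using N_add_square[of x "- sc (of_real c) (U1 x)"] by (simp add: W_def c_def N_minus)
  also have "Re (p x (- sc (of_real c) (U1 x))) = - c * Re (p (U1 x) x)"
    by (simp add: ip_minus_right ip_scale_right ip_cnj[of x "U1 x"])
  also have "(N (sc (of_real c) (U1 x)))\<^sup>2 = c\<^sup>2 * (N (U1 x))\<^sup>2"
    using c by (simp add: N_scale power_mult_distrib)
  finally have W_sq: "(N (W x))\<^sup>2 = (N x)\<^sup>2 - 2 * c * Re (p (U1 x) x) + c\<^sup>2 * (N (U1 x))\<^sup>2"
    by simp
  have "(N (U1 x))\<^sup>2 \<le> d * (N x)\<^sup>2"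
    using N_U1_le[of x] N_nonneg[of "U1 x"] power_mono[of "N (U1 x)" "(M + 1) * N x" 2]
    by (simp add: d_def power_mult_distrib)
  then have "c\<^sup>2 * (N (U1 x))\<^sup>2 \<le> c\<^sup>2 * (d * (N x)\<^sup>2)"
    by (intro mult_left_mono) auto
  also have "\<dots> = c * (N x)\<^sup>2"
    using c by (simp add: power2_eq_square mult.assoc[symmetric])
  finally have "c\<^sup>2 * (N (U1 x))\<^sup>2 \<le> c * (N x)\<^sup>2" .
  moreover have "2 * c * Re (p (U1 x) x) \<ge> 2 * c * (N x)\<^sup>2"
    using U1_coercive[of x] c by simp
  ultimately have "(N (W x))\<^sup>2 \<le> (1 - c) * (N x)\<^sup>2"
    unfolding W_sq by (simp add: algebra_simps)
  also have "\<dots> = (W_bound * N x)\<^sup>2"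
    using d_ge_1 by (simp add: W_bound_def c_def power_mult_distrib)
  finally show "N (W x) \<le> W_bound * N x"
    by (rule power2_le_imp_le) (simp add: W_bound(1) N_nonneg)
qed

definition inv_U1 :: "'a \<Rightarrow> 'a" where
  "inv_U1 x = sc (of_real (1 / d)) (op_series (Abs_fps (\<lambda>_. 1)) W x)"

lemma U1_inv_U1: "U1 (inv_U1 x) = x"
  using op_series_geometric[OF bounded_W self_adjoint_W W_bound(2), of x] d_ge_1
  by (simp add: inv_U1_def W_def lin_scale[OF lin_U1])

lemma inv_U1_U1: "inv_U1 (U1 x) = x"
  using U1_inv_U1[of "U1 x"] U1_inj by blast

lemma lin_inv_U1: "lin inv_U1"
proof (rule linI)
  fix x y c
  show "inv_U1 (x + y) = inv_U1 x + inv_U1 y"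
    by (rule U1_inj) (simp add: lin_add[OF lin_U1] U1_inv_U1)
  show "inv_U1 (sc c x) = sc c (inv_U1 x)"
    by (rule U1_inj) (simp add: lin_scale[OF lin_U1] U1_inv_U1)
qed

lemma self_adjoint_inv_U1: "self_adjoint_wrt p inv_U1"
  unfolding self_adjoint_wrt_def
proof (intro allI)
  fix x y
  have "p (inv_U1 x) y = p (inv_U1 x) (U1 (inv_U1 y))" by (simp add: U1_inv_U1)
  also have "\<dots> = p (U1 (inv_U1 x)) (inv_U1 y)"
    by (rule self_adjoint_wrtD[OF self_adjoint_U1, symmetric])
  also have "\<dots> = p x (inv_U1 y)" by (simp add: U1_inv_U1)
  finally show "p (inv_U1 x) y = p x (inv_U1 y)" .
qed

lemma U_inv_U1: "U (inv_U1 x) = inv_U1 (U x)"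
proof -
  have "U1 (U x') = U (U1 x')" for x' by (simp add: U1_def lin_add[OF lin_U])
  then have "U1 (U (inv_U1 x)) = U x" by (simp add: U1_inv_U1)
  then show ?thesis by (metis inv_U1_U1)
qed

definition cayley :: "'a \<Rightarrow> 'a" where "cayley x = U (inv_U1 x) - inv_U1 x"

lemma lin_cayley: "lin cayley"
  using lin_U lin_inv_U1 unfolding cayley_def
  by (intro linI) (simp_all add: lin_add lin_scale scale_right_diff_distrib algebra_simps)

lemma self_adjoint_cayley: "self_adjoint_wrt p cayley"
  unfolding self_adjoint_wrt_def cayley_def
  by (simp add: ip_diff_left ip_diff_right self_adjoint_wrtD[OF self_adjoint_U]
      self_adjoint_wrtD[OF self_adjoint_inv_U1] U_inv_U1)

lemma U_cayley: "U (cayley x) = cayley (U x)"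
  by (simp add: cayley_def lin_diff[OF lin_U] U_inv_U1)

lemma cayley_anticommute:
  assumes J: "lin J" "\<And>x. J (U x) = U' (J x)"
  shows "J (cayley x) = - cayley (J x)"
proof -
  define y where "y = inv_U1 x"
  define z where "z = inv_U1 (J x)"
  have Jx: "J x = U' (J y) + J y"
    using U1_inv_U1[of x] by (metis U1_def J(2) lin_add[OF J(1)] y_def)
  have "U1 (U z) = U (U1 z)" by (simp add: U1_def lin_add[OF lin_U])
  also have "U1 z = U' (J y) + J y" by (simp add: z_def U1_inv_U1 Jx)
  also have "U (U' (J y) + J y) = U1 (J y)" by (simp add: lin_add[OF lin_U] U_U' U1_def add.commute)
  finally have "U z = J y" using U1_inj by blast
  then have "J (cayley x) = U' (U z) - U z"
    by (simp add: cayley_def y_def[symmetric] lin_diff[OF J(1)] J(2))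
  also have "\<dots> = - cayley (J x)" by (simp add: U'_U cayley_def z_def[symmetric])
  finally show ?thesis .
qed

lemma cayley_funpow_anticommute:
  assumes "lin J" "\<And>x. J (U x) = U' (J x)"
  shows "J ((cayley ^^ n) x) = (if even n then (cayley ^^ n) (J x) else - (cayley ^^ n) (J x))"
proof (induction n)
  case (Suc n)
  then show ?case using cayley_anticommute[OF assms] by (simp add: lin_minus[OF lin_cayley])
qed simp

definition cayley_bound :: real where
  "cayley_bound = sqrt (1 - m / (M\<^sup>2 + 1 + m))"

lemma cayley_bound: "0 \<le> cayley_bound" "cayley_bound < 1"
proof -
  have "m < M\<^sup>2 + 1 + m" by (simp add: add_pos_nonneg add.commute)
  then have "0 < m / (M\<^sup>2 + 1 + m)" "m / (M\<^sup>2 + 1 + m) < 1"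
    using m_pos by simp_all
  then show "0 \<le> cayley_bound" "cayley_bound < 1" by (simp_all add: cayley_bound_def)
qed

text \<open>For \<open>x = U y + y\<close> the Cayley transform maps \<open>x\<close> to \<open>U y - y\<close>, and
  \<open>\<parallel>U y \<plusminus> y\<parallel>\<^sup>2 = s \<plusminus> 2 t\<close> where \<open>t = Re \<langle>U y, y\<rangle> \<ge> m \<parallel>y\<parallel>\<^sup>2\<close> dominates a fixed
  fraction of \<open>s = \<parallel>U y\<parallel>\<^sup>2 + \<parallel>y\<parallel>\<^sup>2 \<le> (M\<^sup>2 + 1) \<parallel>y\<parallel>\<^sup>2\<close>.\<close>
lemma bounded_cayley: "bounded_by cayley cayley_bound"
  unfolding bounded_by_def
proof (intro conjI allI)
  show "0 \<le> cayley_bound" by (rule cayley_bound(1))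
  fix x
  define \<delta> where "\<delta> = m / (M\<^sup>2 + 1 + m)"
  have "m < M\<^sup>2 + 1 + m" by (simp add: add_pos_nonneg add.commute)
  then have \<delta>: "0 < \<delta>" "\<delta> < 1" "\<delta> * (M\<^sup>2 + 1) \<le> m"
    using m_pos by (simp_all add: \<delta>_def field_simps)
  define y where "y = inv_U1 x"
  define t where "t = Re (p (U y) y)"
  define s where "s = (N (U y))\<^sup>2 + (N y)\<^sup>2"
  have cayley_sq: "(N (cayley x))\<^sup>2 = s - 2 * t"
    using N_add_square[of "U y" "- y"]
    by (simp add: cayley_def y_def[symmetric] s_def t_def ip_minus_right N_minus)
  have x_sq: "(N x)\<^sup>2 = s + 2 * t"
    using N_add_square[of "U y" y] U1_inv_U1[of x]
    by (simp add: U1_def y_def[symmetric] s_def t_def)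
  have t: "m * (N y)\<^sup>2 \<le> t" unfolding t_def by (rule U_coercive)
  have "(N (U y))\<^sup>2 \<le> (M * N y)\<^sup>2"
    using bounded_byD[OF bounded_U, of y] N_nonneg[of "U y"] by (intro power_mono) auto
  then have "\<delta> * s \<le> \<delta> * (M\<^sup>2 + 1) * (N y)\<^sup>2"
    using \<delta>(1) mult_left_mono[of s "(M\<^sup>2 + 1) * (N y)\<^sup>2" \<delta>]
    by (simp add: s_def power_mult_distrib algebra_simps)
  also have "\<dots> \<le> m * (N y)\<^sup>2"
    using \<delta>(3) by (intro mult_right_mono) auto
  finally have "\<delta> * s \<le> t" using t by linarith
  moreover have "0 \<le> t"
    using t m_pos by (meson order_trans mult_nonneg_nonneg less_imp_le zero_le_power2)
  moreover have "\<delta> * t \<le> t" using \<open>0 \<le> t\<close> \<delta> by (simp add: mult_left_le_one_le)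
  ultimately have "(N (cayley x))\<^sup>2 \<le> (1 - \<delta>) * (N x)\<^sup>2"
    unfolding cayley_sq x_sq by (simp add: algebra_simps)
  also have "\<dots> = (cayley_bound * N x)\<^sup>2"
    using \<delta>(2)
    by (simp add: cayley_bound_def \<delta>_def[symmetric] power_mult_distrib)
  finally show "N (cayley x) \<le> cayley_bound * N x"
    by (rule power2_le_imp_le) (simp add: cayley_bound(1) N_nonneg)
qed

lemmas summable_two_artanh =
  summable_bounded_coeffs[OF abs_two_artanh_fps_le cayley_bound]

lemmas summable_inv_cayley =
  summable_bounded_coeffs[OF abs_inv_cayley_fps_le cayley_bound]

lemma cayley_fixed_point: "cayley e = e \<Longrightarrow> e = 0"
proof -
  assume "cayley e = e"
  then have "(1 - cayley_bound) * N e \<le> 0"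
    using bounded_byD[OF bounded_cayley, of e] by (simp add: algebra_simps)
  then show "e = 0"
    using cayley_bound(2) N_nonneg[of e] by (simp add: mult_le_0_iff N_eq_0_iff)
qed

text \<open>The operator form of \<open>(1 - X) (1 + 2 X + 2 X\<^sup>2 + \<dots>) = 1 + X\<close>.\<close>
lemma op_series_inv_cayley_identity:
  fixes x :: 'a
  defines "z \<equiv> op_series inv_cayley_fps cayley x"
  shows "z - cayley z = x + cayley x"
proof (rule eq_if_ip_right_eq)
  fix w
  define g where "g n = p w ((cayley ^^ n) x)" for n
  note sums = op_series_sums[OF bounded_cayley summable_inv_cayley]
  have coeff: "complex_of_real (inv_cayley_fps $ n) = (if n = 0 then 1 else 2)" for n
    by (simp add: inv_cayley_fps_nth)
  have "(\<lambda>n. (if n = 0 then 1 else 2) * g n) sums p w z"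
    using sums[of w x] unfolding z_def g_def coeff .
  then have "(\<lambda>n. 2 * g (Suc n)) sums (p w z - g 0)"
    using sums_Suc_iff[of "\<lambda>n. (if n = 0 then 1 else 2) * g n" "p w z - g 0"] by simp
  then have "(\<lambda>n. 2 * g (Suc n) - (if n = 0 then g 1 else 0)) sums (p w z - g 0 - g 1)"
    using sums_single[of 0 "\<lambda>_. g 1"] by (rule sums_diff)
  moreover have "(\<lambda>n. (if n = 0 then 1 else 2) * g (Suc n)) sums p (cayley w) z"
    using sums[of "cayley w" x] unfolding z_def g_def coeff
    by (simp add: self_adjoint_wrtD[OF self_adjoint_cayley])
  moreover have "(\<lambda>n. 2 * g (Suc n) - (if n = 0 then g 1 else 0))
      = (\<lambda>n. (if n = 0 then 1 else 2) * g (Suc n))"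
    by auto
  ultimately have "p (cayley w) z = p w z - g 0 - g 1"
    using sums_unique2 by metis
  then show "p w (z - cayley z) = p w (x + cayley x)"
    by (simp add: ip_diff_right ip_add_right g_def
        self_adjoint_wrtD[OF self_adjoint_cayley, symmetric])
qed

lemma op_series_inv_cayley: "op_series inv_cayley_fps cayley x = U x"
proof -
  define z where "z = op_series inv_cayley_fps cayley x"
  have "cayley (U x) + cayley x = cayley (U1 x)" by (simp add: U1_def lin_add[OF lin_cayley])
  also have "\<dots> = U x - x" by (simp add: cayley_def inv_U1_U1)
  finally have "U x - cayley (U x) = x + cayley x" by (simp add: algebra_simps)
  moreover have "(z - U x) - cayley (z - U x) = (z - cayley z) - (U x - cayley (U x))"
    by (simp add: lin_diff[OF lin_cayley] algebra_simps)
  ultimately have "(z - U x) - cayley (z - U x) = 0"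
    using op_series_inv_cayley_identity[of x] by (simp add: z_def)
  then show ?thesis
    using cayley_fixed_point[of "z - U x"] by (simp add: z_def)
qed

definition log_U :: "'a \<Rightarrow> 'a" where "log_U = op_series two_artanh_fps cayley"

lemma lin_log_U: "lin log_U"
  unfolding log_U_def by (rule lin_op_series[OF bounded_cayley lin_cayley summable_two_artanh])

lemma self_adjoint_log_U: "self_adjoint_wrt p log_U"
  unfolding log_U_def
  by (rule self_adjoint_op_series[OF bounded_cayley self_adjoint_cayley summable_two_artanh])

lemma bounded_log_U: "\<exists>r. bounded_by log_U r"
  unfolding log_U_def using bounded_by_op_series[OF bounded_cayley summable_two_artanh] by blast

lemma U_log_U: "U (log_U x) = log_U (U x)"
  unfolding log_U_def
  by (rule op_series_commute[OF bounded_cayley summable_two_artanh self_adjoint_U U_cayley])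

text \<open>Only odd powers of the Cayley transform occur in \<open>log_U\<close>, and these anticommute with \<open>J\<close>.\<close>
lemma log_U_anticommute:
  assumes J: "lin J" "self_adjoint_wrt p J" "\<And>x. J (U x) = U' (J x)"
  shows "J (log_U x) = - log_U (J x)"
proof (rule eq_if_ip_right_eq)
  fix w
  note sums = op_series_sums[OF bounded_cayley summable_two_artanh]
  have "of_real (two_artanh_fps $ n) * p (J w) ((cayley ^^ n) x)
      = - (of_real (two_artanh_fps $ n) * p w ((cayley ^^ n) (J x)))" for n
    by (simp add: self_adjoint_wrtD[OF J(2)] cayley_funpow_anticommute[OF J(1,3)]
        ip_minus_right two_artanh_fps_nth)
  then have "(\<lambda>n. - (of_real (two_artanh_fps $ n) * p w ((cayley ^^ n) (J x))))
      sums p (J w) (log_U x)"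
    using sums[of "J w" x] by (simp add: log_U_def)
  moreover have "(\<lambda>n. - (of_real (two_artanh_fps $ n) * p w ((cayley ^^ n) (J x))))
      sums - p w (log_U (J x))"
    using sums_minus[OF sums[of w "J x"]] by (simp add: log_U_def)
  ultimately have "p (J w) (log_U x) = - p w (log_U (J x))" using sums_unique2 by blast
  then show "p w (J (log_U x)) = p w (- log_U (J x))"
    by (simp add: self_adjoint_wrtD[OF J(2), symmetric] ip_minus_right)
qed

lemma exp_log_U: "exp_series_to sc N log_U x (U x)"
proof -
  have "summable (\<lambda>n. two_artanh_fps $ n * cayley_bound ^ n)"
    using summable_two_artanh by (simp add: two_artanh_fps_nonneg)
  from exp_series_op_series[OF bounded_cayley self_adjoint_cayley two_artanh_fps_nonneg _ this]
  show ?thesis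
    by (simp add: log_U_def fps_exp_compose_two_artanh op_series_inv_cayley two_artanh_fps_nth)
qed

end

context hilbert_form
begin

lemma exp_series_to_conjugate:
  assumes J: "lin J" "bounded_by J r" "\<And>x. J (J x) = x" and JQ: "\<And>v. J (Q v) = - Q (J v)"
    and "exp_series_to sc N Q (J x) y"
  shows "exp_series_to sc N (\<lambda>v. - Q v) x (J y)"
proof -
  have powers: "((\<lambda>v. - Q v) ^^ k) x = J ((Q ^^ k) (J x))" for k
  proof (induction k)
    case (Suc k)
    then show ?case using JQ[of "(Q ^^ k) (J x)"] by simp
  qed (simp add: J(3))
  define S where "S n = (\<Sum>k<n. sc (inverse (fact k)) ((Q ^^ k) (J x)))" for n
  have partial_sums: "(\<Sum>k<n. sc (inverse (fact k)) (((\<lambda>v. - Q v) ^^ k) x)) = J (S n)" for n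
    by (simp add: S_def powers lin_sum[OF J(1)] lin_scale[OF J(1)])
  have "(\<lambda>n. N (S n - y)) \<longlonglongrightarrow> 0" using assms(5) unfolding exp_series_to_def S_def .
  then have "(\<lambda>n. r * N (S n - y)) \<longlonglongrightarrow> 0" by (rule tendsto_mult_right_zero)
  then have "(\<lambda>n. N (J (S n) - J y)) \<longlonglongrightarrow> 0"
  proof (rule real_tendsto_sandwich[OF _ _ tendsto_const, rotated 2])
    show "\<forall>\<^sub>F n in sequentially. 0 \<le> N (J (S n) - J y)" by (simp add: N_nonneg)
    show "\<forall>\<^sub>F n in sequentially. N (J (S n) - J y) \<le> r * N (S n - y)"
      by (simp add: bounded_byD[OF J(2)] lin_diff[OF J(1), symmetric])
  qed
  then show ?thesis unfolding exp_series_to_def partial_sums .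
qed

end

section \<open>Completions and fundamental symmetries\<close>

lemma herm_sesq_add_right: "herm_sesq sc ip \<Longrightarrow> ip x (y + z) = ip x y + ip x z"
  unfolding herm_sesq_def by blast

lemma herm_sesq_add_left: "herm_sesq sc ip \<Longrightarrow> ip (x + y) z = ip x z + ip y z"
  unfolding herm_sesq_def by (metis complex_cnj_add)

lemma herm_sesq_minus_left: "herm_sesq sc ip \<Longrightarrow> ip (- x) y = - ip x y"
  using herm_sesq_add_left[of sc ip x "- x" y] herm_sesq_add_left[of sc ip 0 0 y]
  by (simp add: eq_neg_iff_add_eq_0 add.commute)

lemma herm_sesq_cnj: "herm_sesq sc ip \<Longrightarrow> ip y x = cnj (ip x y)"
  unfolding herm_sesq_def by blast

lemma fd_plus:
  assumes vs: "vector_space sc" and fd: "fundamental_decomposition sc ip Lp Lm"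
  shows "fd_plus Lp Lm f \<in> Lp" "f - fd_plus Lp Lm f \<in> Lm"
    and "u \<in> Lp \<Longrightarrow> f - u \<in> Lm \<Longrightarrow> fd_plus Lp Lm f = u"
proof -
  interpret M: module sc using vs by (simp add: module_iff_vector_space)
  have sub: "M.subspace Lp" "M.subspace Lm"
    using fd unfolding fundamental_decomposition_def positive_subspace_def negative_subspace_def
    by auto
  have unique: "u = u'" if "u \<in> Lp" "f - u \<in> Lm" "u' \<in> Lp" "f - u' \<in> Lm" for u u'
  proof -
    have "u - u' \<in> Lp" using M.subspace_diff[OF sub(1) that(1,3)] .
    moreover have "(f - u') - (f - u) \<in> Lm" using M.subspace_diff[OF sub(2) that(4,2)] .
    then have "u - u' \<in> Lm" by simp
    ultimately have "u - u' = 0" using fd unfolding fundamental_decomposition_def by blast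
    then show ?thesis by simp
  qed
  obtain u v where "u \<in> Lp" "v \<in> Lm" "f = u + v"
    using fd unfolding fundamental_decomposition_def by blast
  then have u: "u \<in> Lp" "f - u \<in> Lm" by simp_all
  have "fd_plus Lp Lm f = u"
    unfolding fd_plus_def
  proof (rule the_equality)
    show "u \<in> Lp \<and> f - u \<in> Lm" using u by simp
    show "u' = u" if "u' \<in> Lp \<and> f - u' \<in> Lm" for u' using unique that u by blast
  qed
  then show "fd_plus Lp Lm f \<in> Lp" "f - fd_plus Lp Lm f \<in> Lm"
    and "u' \<in> Lp \<Longrightarrow> f - u' \<in> Lm \<Longrightarrow> fd_plus Lp Lm f = u'" for u'
    using u unique by auto
qed

lemma fd_plus_fd_J:
  assumes vs: "vector_space sc" and fd: "fundamental_decomposition sc ip Lp Lm"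
  shows "fd_plus Lp Lm (fd_J Lp Lm f) = fd_plus Lp Lm f"
proof -
  interpret M: module sc using vs by (simp add: module_iff_vector_space)
  have "M.subspace Lm"
    using fd unfolding fundamental_decomposition_def negative_subspace_def by auto
  then have "- (f - fd_plus Lp Lm f) \<in> Lm" using fd_plus(2)[OF vs fd] by (rule M.subspace_neg)
  then have "fd_J Lp Lm f - fd_plus Lp Lm f \<in> Lm" by (simp add: fd_J_def fd_minus_def)
  then show ?thesis using fd_plus(1,3)[OF vs fd] by blast
qed

lemma fd_J_fd_J:
  assumes "vector_space sc" "fundamental_decomposition sc ip Lp Lm"
  shows "fd_J Lp Lm (fd_J Lp Lm f) = f"
  using fd_plus_fd_J[OF assms] by (simp add: fd_J_def fd_minus_def)

lemma fd_ip_fd_J: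
  assumes vs: "vector_space sc" and herm: "herm_sesq sc ip"
    and fd: "fundamental_decomposition sc ip Lp Lm"
  shows "fd_ip ip Lp Lm (fd_J Lp Lm f) g = ip f g"
proof -
  define f1 f2 g1 g2 where "f1 = fd_plus Lp Lm f" "f2 = f - f1" "g1 = fd_plus Lp Lm g" "g2 = g - g1"
  have mem: "f1 \<in> Lp" "f2 \<in> Lm" "g1 \<in> Lp" "g2 \<in> Lm"
    using fd_plus(1,2)[OF vs fd] by (auto simp: f1_f2_g1_g2_def)
  have orth: "ip a b = 0" "ip b a = 0" if "a \<in> Lp" "b \<in> Lm" for a b
    using fd that herm_sesq_cnj[OF herm, of a b] unfolding fundamental_decomposition_def by auto
  have parts: "fd_plus Lp Lm (fd_J Lp Lm f) = f1" "fd_minus Lp Lm (fd_J Lp Lm f) = - f2"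
    "fd_minus Lp Lm g = g2"
    using fd_plus_fd_J[OF vs fd, of f] by (simp_all add: fd_minus_def fd_J_def f1_f2_g1_g2_def)
  have "fd_ip ip Lp Lm (fd_J Lp Lm f) g = ip f1 g1 + ip f2 g2"
    unfolding fd_ip_def parts f1_f2_g1_g2_def(3)[symmetric]
    by (simp add: herm_sesq_minus_left[OF herm])
  also have "\<dots> = ip (f1 + f2) (g1 + g2)"
    by (simp add: herm_sesq_add_left[OF herm] herm_sesq_add_right[OF herm] orth mem)
  finally show ?thesis by (simp add: f1_f2_g1_g2_def)
qed

context ip_space
begin

lemma ip_bounded_by_le:
  assumes "bounded_by S a" "bounded_by T b"
  shows "cmod (p (S x) (T y)) \<le> a * b * N x * N y"
proof -
  have "cmod (p (S x) (T y)) \<le> N (S x) * N (T y)" by (rule Cauchy_Schwarz)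
  also have "\<dots> \<le> (a * N x) * (b * N y)"
    using assms by (intro mult_mono bounded_byD) (auto simp: N_nonneg bounded_by_nonneg)
  finally show ?thesis by (simp add: mult_ac)
qed

lemma dense_image_eq_0:
  assumes dense: "dense_image N \<iota>" and diff: "\<And>x y. f (x - y) = f x - f y"
    and bound: "\<And>x. cmod (f x) \<le> C * N x" and zero: "\<And>u. f (\<iota> u) = 0"
  shows "f x = 0"
proof (rule ccontr)
  assume "f x \<noteq> 0"
  then have a: "cmod (f x) > 0" by simp
  define e where "e = cmod (f x) / (\<bar>C\<bar> + 1)"
  have "e > 0" using a by (simp add: e_def add_pos_nonneg)
  then obtain u where u: "N (x - \<iota> u) < e" using dense unfolding dense_image_def by blast
  have "cmod (f x) = cmod (f (x - \<iota> u))" using diff[of x "\<iota> u"] zero[of u] by simp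
  also have "\<dots> \<le> \<bar>C\<bar> * N (x - \<iota> u)"
    using bound[of "x - \<iota> u"] mult_right_mono[OF abs_ge_self N_nonneg, of C "x - \<iota> u"] by linarith
  also have "\<dots> \<le> \<bar>C\<bar> * e" using u by (intro mult_left_mono) auto
  also have "\<dots> < cmod (f x)" using a by (simp add: e_def field_simps)
  finally show False by simp
qed

lemma dense_image_lin_eq:
  assumes dense: "dense_image N \<iota>"
    and T1: "lin T1" "bounded_by T1 r1" and T2: "lin T2" "bounded_by T2 r2"
    and agree: "\<And>u. T1 (\<iota> u) = T2 (\<iota> u)"
  shows "T1 x = T2 x"
proof (rule eq_if_ip_right_eq)
  fix w
  have "p w (T1 x) - p w (T2 x) = 0"
  proof (rule dense_image_eq_0[OF dense, where f="\<lambda>v. p w (T1 v) - p w (T2 v)"])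
    show "p w (T1 (a - b)) - p w (T2 (a - b))
        = (p w (T1 a) - p w (T2 a)) - (p w (T1 b) - p w (T2 b))"
      for a b by (simp add: lin_diff[OF T1(1)] lin_diff[OF T2(1)] ip_diff_right)
    show "cmod (p w (T1 v) - p w (T2 v)) \<le> (r1 + r2) * N w * N v" for v
      using norm_triangle_ineq4[of "p w (T1 v)" "p w (T2 v)"]
        ip_bounded_by_le[OF bounded_by_id T1(2), of w v]
        ip_bounded_by_le[OF bounded_by_id T2(2), of w v]
      by (simp add: algebra_simps)
    show "p w (T1 (\<iota> u)) - p w (T2 (\<iota> u)) = 0" for u by (simp add: agree)
  qed
  then show "p w (T1 x) = p w (T2 x)" by simp
qed

lemma dense_image_sesq_eq_0:
  assumes dense: "dense_image N \<iota>"
    and diff_left: "\<And>x y z. B (x - y) z = B x z - B y z"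
    and diff_right: "\<And>x y z. B x (y - z) = B x y - B x z"
    and bound: "\<And>x y. cmod (B x y) \<le> C * N x * N y"
    and zero: "\<And>u v. B (\<iota> u) (\<iota> v) = 0"
  shows "B x y = 0"
proof -
  have partial: "B (\<iota> u) y = 0" for u
    by (rule dense_image_eq_0[OF dense, where C="C * N (\<iota> u)"]) (use diff_right bound zero in auto)
  show ?thesis
    by (rule dense_image_eq_0[OF dense, where f="\<lambda>x. B x y" and C="C * N y"])
       (use diff_left bound partial in \<open>auto simp: algebra_simps\<close>)
qed

lemma continuous_extension_bounded_by:
  assumes "continuous_extension sc N \<iota> J0 J"
  obtains r where "lin J" "bounded_by J r" "\<And>x. J (\<iota> x) = \<iota> (J0 x)"
  using assms unfolding continuous_extension_def bounded_wrt_iff_bounded_by by blast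

lemma extension_fd_J_involution:
  assumes vs: "vector_space sc0" and fd: "fundamental_decomposition sc0 ip Lp Lm"
    and dense: "dense_image N \<iota>" and J: "continuous_extension sc N \<iota> (fd_J Lp Lm) J"
  shows "J (J x) = x"
proof -
  obtain r where J: "lin J" "bounded_by J r" "\<And>x. J (\<iota> x) = \<iota> (fd_J Lp Lm x)"
    using continuous_extension_bounded_by[OF J] by blast
  show ?thesis
    by (rule dense_image_lin_eq[OF dense lin_comp[OF J(1) J(1)] bounded_by_comp[OF J(2) J(2)]
          lin_id bounded_by_id])
       (simp add: J(3) fd_J_fd_J[OF vs fd])
qed

lemma extension_fd_J_self_adjoint:
  assumes vs: "vector_space sc0" and herm: "herm_sesq sc0 ip"
    and fd: "fundamental_decomposition sc0 ip Lp Lm"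
    and dense: "dense_image N \<iota>" and J: "continuous_extension sc N \<iota> (fd_J Lp Lm) J"
    and p_\<iota>: "\<And>x y. p (\<iota> x) (\<iota> y) = fd_ip ip Lp Lm x y"
  shows "self_adjoint_wrt p J"
proof -
  obtain r where J: "lin J" "bounded_by J r" "\<And>x. J (\<iota> x) = \<iota> (fd_J Lp Lm x)"
    using continuous_extension_bounded_by[OF J] by blast
  have "p (J x) y - p x (J y) = 0" for x y
  proof (rule dense_image_sesq_eq_0[OF dense, where B="\<lambda>x y. p (J x) y - p x (J y)" and C="2 * r"])
    show "cmod (p (J a) b - p a (J b)) \<le> 2 * r * N a * N b" for a b
      using norm_triangle_ineq4[of "p (J a) b" "p a (J b)"]
        ip_bounded_by_le[OF J(2) bounded_by_id, of a b]
        ip_bounded_by_le[OF bounded_by_id J(2), of a b]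
      by simp
    show "p (J (\<iota> u)) (\<iota> v) - p (\<iota> u) (J (\<iota> v)) = 0" for u v
      using herm_sesq_cnj[OF herm, of v u] ip_cnj[of "\<iota> u" "\<iota> (fd_J Lp Lm v)"]
      by (simp add: J(3) p_\<iota> fd_ip_fd_J[OF vs herm fd])
  qed (simp_all add: lin_diff[OF J(1)] ip_diff_left ip_diff_right)
  then show ?thesis unfolding self_adjoint_wrt_def by simp
qed

end

locale equivalent_forms = hilbert_form sc p + q: ip_space sc q
  for sc :: "complex \<Rightarrow> 'a::ab_group_add \<Rightarrow> 'a" and p q +
  assumes norms_equiv: "norms_equiv (form_norm p) (form_norm q)"
begin

lemma bounded_wrt_second_norm:
  assumes "bounded_wrt N T"
  shows "bounded_wrt q.N T"
proof -
  obtain c C where c: "c > 0" "C > 0" "\<And>x. c * N x \<le> q.N x" "\<And>x. q.N x \<le> C * N x"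
    using norms_equiv unfolding norms_equiv_def by blast
  obtain r where r: "bounded_by T r" using assms bounded_wrt_iff_bounded_by by blast
  have "q.N (T x) \<le> (C * r / c) * q.N x" for x
  proof -
    have "q.N (T x) \<le> C * N (T x)" by (rule c(4))
    also have "\<dots> \<le> C * (r * N x)" using c(2) by (intro mult_left_mono bounded_byD[OF r]) auto
    also have "\<dots> \<le> C * (r * (q.N x / c))"
      using c bounded_by_nonneg[OF r]
      by (intro mult_left_mono) (auto simp: pos_le_divide_eq mult.commute)
    finally show ?thesis by simp
  qed
  then show ?thesis unfolding bounded_wrt_def by blast
qed

lemma extensions_product_represents_second_form:
  assumes vs: "vector_space sc0" and herm: "herm_sesq sc0 ip"
    and fdL: "fundamental_decomposition sc0 ip Lp Lm"
    and fdM: "fundamental_decomposition sc0 ip Mp Mm"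
    and dense: "dense_image N \<iota>"
    and JL: "continuous_extension sc N \<iota> (fd_J Lp Lm) JL"
    and JM: "continuous_extension sc N \<iota> (fd_J Mp Mm) JM"
    and p_\<iota>: "\<And>x y. p (\<iota> x) (\<iota> y) = fd_ip ip Lp Lm x y"
    and q_\<iota>: "\<And>x y. q (\<iota> x) (\<iota> y) = fd_ip ip Mp Mm x y"
  shows "q x y = p (JL (JM x)) y"
proof -
  obtain rL where JL: "lin JL" "bounded_by JL rL" "\<And>x. JL (\<iota> x) = \<iota> (fd_J Lp Lm x)"
    using continuous_extension_bounded_by[OF JL] by blast
  obtain rM where JM: "lin JM" "bounded_by JM rM" "\<And>x. JM (\<iota> x) = \<iota> (fd_J Mp Mm x)"
    using continuous_extension_bounded_by[OF JM] by blast
  obtain C where C: "\<And>x. q.N x \<le> C * N x"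
    using norms_equiv unfolding norms_equiv_def by blast
  have "q x y - p (JL (JM x)) y = 0"
  proof (rule dense_image_sesq_eq_0[OF dense, where B="\<lambda>x y. q x y - p (JL (JM x)) y"
        and C="C * C + rL * rM"])
    show "cmod (q a b - p (JL (JM a)) b) \<le> (C * C + rL * rM) * N a * N b" for a b
    proof -
      have "cmod (q a b) \<le> (C * N a) * (C * N b)"
        using q.Cauchy_Schwarz[of a b] C[of a] C[of b] q.N_nonneg[of a] q.N_nonneg[of b]
        by (meson mult_mono order_trans)
      moreover have "cmod (p (JL (JM a)) b) \<le> rL * rM * 1 * N a * N b"
        by (rule ip_bounded_by_le[OF bounded_by_comp[OF JL(2) JM(2)] bounded_by_id])
      ultimately show ?thesis
        using norm_triangle_ineq4[of "q a b" "p (JL (JM a)) b"] by (simp add: algebra_simps)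
    qed
    show "q (\<iota> u) (\<iota> v) - p (JL (JM (\<iota> u))) (\<iota> v) = 0" for u v
      using fd_ip_fd_J[OF vs herm fdM, of "fd_J Mp Mm u" v]
      by (simp add: q_\<iota> p_\<iota> JL(3) JM(3) fd_J_fd_J[OF vs fdM] fd_ip_fd_J[OF vs herm fdL])
  qed (simp_all add: lin_diff[OF JL(1)] lin_diff[OF JM(1)] ip_diff_left ip_diff_right
      q.ip_diff_left q.ip_diff_right)
  then show ?thesis by simp
qed

lemma positive_invertible_op_symmetry_product:
  assumes J1: "lin J1" "\<And>x. J1 (J1 x) = x" "bounded_by J1 r1"
    and J2: "lin J2" "\<And>x. J2 (J2 x) = x" "bounded_by J2 r2"
    and q_p: "\<And>x y. q x y = p (J1 (J2 x)) y"
  shows "\<exists>m. positive_invertible_op sc p (\<lambda>x. J1 (J2 x)) (\<lambda>x. J2 (J1 x)) m (r1 * r2)"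
proof -
  obtain c where c: "c > 0" "\<And>x. c * N x \<le> q.N x"
    using norms_equiv unfolding norms_equiv_def by blast
  have coercive: "Re (p (J1 (J2 x)) x) \<ge> c\<^sup>2 * (N x)\<^sup>2" for x
  proof -
    have "(c * N x)\<^sup>2 \<le> (q.N x)\<^sup>2"
      using c(2)[of x] c(1) N_nonneg[of x] by (intro power_mono) auto
    then show ?thesis by (simp add: q_p[symmetric] q.N_square power_mult_distrib)
  qed
  have self_adjoint: "self_adjoint_wrt p (\<lambda>x. J1 (J2 x))"
    unfolding self_adjoint_wrt_def
  proof (intro allI)
    fix x y
    have "p (J1 (J2 x)) y = cnj (q y x)" by (simp add: q_p[symmetric] q.ip_cnj[of x y])
    also have "\<dots> = p x (J1 (J2 y))" by (simp add: q_p ip_cnj[of x])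
    finally show "p (J1 (J2 x)) y = p x (J1 (J2 y))" .
  qed
  have "positive_invertible_op sc p (\<lambda>x. J1 (J2 x)) (\<lambda>x. J2 (J1 x)) (c\<^sup>2) (r1 * r2)"
  proof intro_locales
    show "positive_invertible_op_axioms sc p (\<lambda>x. J1 (J2 x)) (\<lambda>x. J2 (J1 x)) (c\<^sup>2) (r1 * r2)"
      unfolding positive_invertible_op_axioms_def
      using coercive self_adjoint c(1) J1(2) J2(2)
        lin_comp[OF J1(1) J2(1)] bounded_by_comp[OF J1(3) J2(3)]
      by auto
  qed
  then show ?thesis by blast
qed

lemma log_of_symmetry_product:
  assumes J1: "lin J1" "bounded_wrt N J1" "\<And>x. J1 (J1 x) = x" "self_adjoint_wrt p J1"
    and J2: "lin J2" "bounded_wrt N J2" "\<And>x. J2 (J2 x) = x"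
    and q_p: "\<And>x y. q x y = p (J1 (J2 x)) y"
  shows "\<exists>Q. lin Q \<and> bounded_wrt N Q \<and> self_adjoint_wrt p Q \<and>
           bounded_wrt q.N Q \<and> self_adjoint_wrt q Q \<and>
           (\<forall>x. J1 (Q x) = - Q (J1 x)) \<and> (\<forall>x. J2 (Q x) = - Q (J2 x)) \<and>
           (\<forall>x. exp_series_to sc N Q x (J1 (J2 x))) \<and>
           (\<forall>x. exp_series_to sc N (\<lambda>y. - Q y) x (J2 (J1 x)))"
proof -
  obtain r1 r2 where r: "bounded_by J1 r1" "bounded_by J2 r2"
    using J1(2) J2(2) bounded_wrt_iff_bounded_by by blast
  obtain m where "positive_invertible_op sc p (\<lambda>x. J1 (J2 x)) (\<lambda>x. J2 (J1 x)) m (r1 * r2)"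
    using positive_invertible_op_symmetry_product[OF J1(1,3) r(1) J2(1,3) r(2) q_p] by blast
  then interpret U: positive_invertible_op sc p "\<lambda>x. J1 (J2 x)" "\<lambda>x. J2 (J1 x)" m "r1 * r2" .
  have J1_log: "J1 (U.log_U x) = - U.log_U (J1 x)" for x
    by (rule U.log_U_anticommute[OF J1(1,4)]) (simp add: J1(3))
  have J2_log: "J2 (U.log_U x) = - U.log_U (J2 x)" for x
    using J1_log[of "J1 (J2 x)"] U.U_log_U[of x] J1(3) by metis
  have "self_adjoint_wrt q U.log_U"
    unfolding self_adjoint_wrt_def
    using self_adjoint_wrtD[OF U.self_adjoint_log_U] by (simp add: q_p U.U_log_U)
  moreover have "bounded_wrt N U.log_U"
    using U.bounded_log_U bounded_wrt_iff_bounded_by by blast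
  moreover have "exp_series_to sc N (\<lambda>y. - U.log_U y) x (J2 (J1 x))" for x
    using exp_series_to_conjugate[OF J1(1) r(1) J1(3) J1_log U.exp_log_U] by (simp add: J1(3))
  ultimately show ?thesis
    using U.lin_log_U U.self_adjoint_log_U U.exp_log_U J1_log J2_log bounded_wrt_second_norm
    by blast
qed

end

theorem proposition3p2:
  fixes sc :: "complex \<Rightarrow> 'a::ab_group_add \<Rightarrow> 'a"
    and ip :: "'a \<Rightarrow> 'a \<Rightarrow> complex"
    and Lp Lm Mp Mm :: "'a set"
    and sc' :: "complex \<Rightarrow> 'b::ab_group_add \<Rightarrow> 'b"
    and \<iota> :: "'a \<Rightarrow> 'b"
    and pL pM :: "'b \<Rightarrow> 'b \<Rightarrow> complex"
    and JLe JMe :: "'b \<Rightarrow> 'b"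
  assumes "vector_space sc"
    and "herm_sesq sc ip" and "non_degenerate ip" and "indefinite ip"
    and "fundamental_decomposition sc ip Lp Lm"
    and "fundamental_decomposition sc ip Mp Mm"
    and "norms_equiv (fd_norm ip Lp Lm) (fd_norm ip Mp Mm)"
    and "common_completion sc (fd_ip ip Lp Lm) (fd_ip ip Mp Mm) sc' \<iota> pL pM"
    and "continuous_extension sc' (form_norm pL) \<iota> (fd_J Lp Lm) JLe"
    and "continuous_extension sc' (form_norm pL) \<iota> (fd_J Mp Mm) JMe"
  shows "\<exists>Q. Vector_Spaces.linear sc' sc' Q \<and>
           bounded_wrt (form_norm pL) Q \<and> self_adjoint_wrt pL Q \<and>
           bounded_wrt (form_norm pM) Q \<and> self_adjoint_wrt pM Q \<and>
           (\<forall>x. JLe (Q x) = - Q (JLe x)) \<and> (\<forall>x. JMe (Q x) = - Q (JMe x)) \<and>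
           (\<forall>x. exp_series_to sc' (form_norm pL) Q x (JLe (JMe x))) \<and>
           (\<forall>x. exp_series_to sc' (form_norm pL) (\<lambda>y. - Q y) x (JMe (JLe x)))"
proof -
  note vs = assms(1) and herm = assms(2) and fdL = assms(5) and fdM = assms(6)
    and JL = assms(9) and JM = assms(10)
  have "vector_space sc'" "inner_product_form sc' pL" "inner_product_form sc' pM"
    and "norms_equiv (form_norm pL) (form_norm pM)" and "complete_wrt (form_norm pL)"
    and dense: "dense_image (form_norm pL) \<iota>"
    and pL_\<iota>: "\<And>x y. pL (\<iota> x) (\<iota> y) = fd_ip ip Lp Lm x y"
    and pM_\<iota>: "\<And>x y. pM (\<iota> x) (\<iota> y) = fd_ip ip Mp Mm x y"
    using assms(8) unfolding common_completion_def by auto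
  then interpret equivalent_forms sc' pL pM
    by (intro equivalent_forms.intro hilbert_form.intro ip_space.intro ip_space_axioms.intro
        hilbert_form_axioms.intro equivalent_forms_axioms.intro) auto
  show ?thesis
  proof (rule log_of_symmetry_product)
    show "lin JLe" "bounded_wrt N JLe" "lin JMe" "bounded_wrt N JMe"
      using JL JM unfolding continuous_extension_def by auto
    show "JLe (JLe x) = x" "JMe (JMe x) = x" for x
      by (rule extension_fd_J_involution[OF vs fdL dense JL]
          extension_fd_J_involution[OF vs fdM dense JM])+
    show "self_adjoint_wrt pL JLe"
      by (rule extension_fd_J_self_adjoint[OF vs herm fdL dense JL pL_\<iota>])
    show "pM x y = pL (JLe (JMe x)) y" for x y
      by (rule extensions_product_represents_second_form[OF vs herm fdL fdM dense JL JM pL_\<iota> pM_\<iota>])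
  qed
qed

end
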